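(* Let $X_1,X_2,\ldots$ be i.i.d. non-negative random variables distributed as $X$, with finite mean $\mu>0$. Then for each fixed integer $m\geqslant 2$ and each $i\in\{1,\ldots,m\}$, as $n\to\infty$, \[ \widehat{{}_iIG}_{m;\min}\xrightarrow{\text{a.s.}} IG_{m;\min}\quad\text{and}\quad \widehat{{}^iIG}_{m;\max}\xrightarrow{\text{a.s.}} IG_{m;\max}. \]
   Context: For $n\geqslant m$, based on $X_1,\ldots,X_n$, define \[ \widehat{{}_iIG}_{m;\min}=\frac{(m-1)!}{(n-1)(n-2)\cdots(n-m+1)}\,\frac{\sum_{1\leqslant j_1<\cdots<j_m\leqslant n}\left[X_{j_i}-\min\{X_{j_1},\ldots,X_{j_m}\}\right]}{\sum_{k=1}^n X_k}, \] \[ \widehat{{}^iIG}_{m;\max}=\frac{(m-1)!}{(n-1)(n-2)\cdots(n-m+1)}\,\frac{\sum_{1\leqslant j_1<\cdots<j_m\leqslant n}\left[\max\{X_{j_1},\ldots,X_{j_m}\}-X_{j_i}\right]}{\sum_{k=1}^n X_k}. \] The population quantities are $IG_{m;\min}=\dfrac{\mathbb{E}[X_1-\min\{X_1,\ldots,X_m\}]}{m\mu}$ and $IG_{m;\max}=\dfrac{\mathbb{E}[\max\{X_1,\ldots,X_m\}-X_1]}{m\mu}$. *)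

theory Defs
  imports "HOL-Probability.Probability"
begin

text \<open>For a subset J of {1..n} with m elements, j_1 < ... < j_m are its elements in
  increasing order, so j_i = sorted_list_of_set J ! (i - 1).\<close>

definition coeff_IG :: "nat \<Rightarrow> nat \<Rightarrow> real" where
  "coeff_IG m n = fact (m - 1) / (\<Prod>k = 1..m - 1. (real n - real k))"

definition IG_min_hat :: "nat \<Rightarrow> nat \<Rightarrow> (nat \<Rightarrow> real) \<Rightarrow> nat \<Rightarrow> real" where
  "IG_min_hat m i x n =
     coeff_IG m n *
     ((\<Sum>J \<in> {J. J \<subseteq> {1..n} \<and> card J = m}.
         x (sorted_list_of_set J ! (i - 1)) - Min (x ` J))
      / (\<Sum>k = 1..n. x k))"

definition IG_max_hat :: "nat \<Rightarrow> nat \<Rightarrow> (nat \<Rightarrow> real) \<Rightarrow> nat \<Rightarrow> real" where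
  "IG_max_hat m i x n =
     coeff_IG m n *
     ((\<Sum>J \<in> {J. J \<subseteq> {1..n} \<and> card J = m}.
         Max (x ` J) - x (sorted_list_of_set J ! (i - 1)))
      / (\<Sum>k = 1..n. x k))"

end

theory Submission
  imports Defs "HOL-Real_Asymp.Real_Asymp"
begin

(* Both estimators are U-statistics divided by the sample mean: since coeff_IG m n * (n choose m)
   = n / m, the estimator equals U_n / (m * S_n / n), where S_n = X_1 + ... + X_n and U_n is the
   U-statistic of the kernel v_i - min v (resp. max v - v_i). By exchangeability the kernel means
   are E[X_1 - min(X_1, ..., X_m)] and E[max(X_1, ..., X_m) - X_1]; both kernels are nonnegative
   and bounded by the sum of the |v_l|.

   For a bounded kernel, terms with disjoint index sets are independent, so Var U_n = O(1/n);
   Chebyshev and Borel-Cantelli give convergence along n = k^2, and monotonicity of the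
   unnormalised sums fills the gaps. A dominated kernel is truncated at level K; the error is at
   most m times the sample mean of (|X_j| - K/m)^+, which tends to m E (|X| - K/m)^+ by the strong
   law of large numbers. That law is in turn the bounded case m = 1 applied to truncations, with
   the tails controlled by Garsia's maximal inequality. *)

section \<open>Subsets of a given size\<close>

definition msubsets :: "nat \<Rightarrow> nat \<Rightarrow> nat set set" where
  "msubsets m n = {J. J \<subseteq> {1..n} \<and> card J = m}"

lemma finite_msubsets [simp]: "finite (msubsets m n)"
  unfolding msubsets_def by (rule finite_subset[of _ "Pow {1..n}"]) auto

lemma card_msubsets: "card (msubsets m n) = n choose m"
  unfolding msubsets_def using n_subsets[of "{1..n}" m] by simp

lemma msubsetsD:
  assumes "J \<in> msubsets m n"
  shows "finite J" "card J = m" "J \<subseteq> {1..n}"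
  using assms unfolding msubsets_def by (auto intro: finite_subset)

lemma msubsets_mono: "n \<le> n' \<Longrightarrow> msubsets m n \<subseteq> msubsets m n'"
  unfolding msubsets_def by auto

lemma atLeastAtMost_in_msubsets [simp]: "{1..m} \<in> msubsets m m"
  by (simp add: msubsets_def)

lemma msubsets_1: "msubsets 1 n = (\<lambda>k. {k}) ` {1..n}"
  unfolding msubsets_def by (auto simp: card_1_singleton_iff)

lemma card_msubsets_containing:
  assumes j: "j \<in> {1..n}" and m: "m \<ge> 1"
  shows "card {J \<in> msubsets m n. j \<in> J} = (n - 1) choose (m - 1)"
proof -
  have "bij_betw (\<lambda>J. J - {j}) {J \<in> msubsets m n. j \<in> J} {B. B \<subseteq> {1..n} - {j} \<and> card B = m - 1}"
  proof (rule bij_betw_byWitness[where f'="insert j"])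
    show "insert j ` {B. B \<subseteq> {1..n} - {j} \<and> card B = m - 1} \<subseteq> {J \<in> msubsets m n. j \<in> J}"
    proof
      fix x assume "x \<in> insert j ` {B. B \<subseteq> {1..n} - {j} \<and> card B = m - 1}"
      then obtain B where B: "B \<subseteq> {1..n} - {j}" "card B = m - 1" and x: "x = insert j B"
        by auto
      have "finite B" using B(1) by (rule finite_subset) auto
      moreover have "j \<notin> B" using B(1) by auto
      ultimately show "x \<in> {J \<in> msubsets m n. j \<in> J}" using B j m x by (auto simp: msubsets_def)
    qed
  qed (auto simp: msubsets_def card_Diff_singleton_if intro: finite_subset)
  then have "card {J \<in> msubsets m n. j \<in> J} = card {B. B \<subseteq> {1..n} - {j} \<and> card B = m - 1}"
    by (rule bij_betw_same_card)
  also have "\<dots> = (n - 1) choose (m - 1)"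
    using j by (subst n_subsets) auto
  finally show ?thesis .
qed

lemma card_msubsets_meeting_le:
  assumes J: "J \<in> msubsets m n" and m: "m \<ge> 1"
  shows "card {J' \<in> msubsets m n. J \<inter> J' \<noteq> {}} \<le> m * ((n - 1) choose (m - 1))"
proof -
  have "{J' \<in> msubsets m n. J \<inter> J' \<noteq> {}} = (\<Union>j\<in>J. {J' \<in> msubsets m n. j \<in> J'})"
    by auto
  then have "card {J' \<in> msubsets m n. J \<inter> J' \<noteq> {}} \<le> (\<Sum>j\<in>J. card {J' \<in> msubsets m n. j \<in> J'})"
    using card_UN_le[OF msubsetsD(1)[OF J]] by simp
  also have "\<dots> = (\<Sum>j\<in>J. (n - 1) choose (m - 1))"
    using msubsetsD(3)[OF J] m by (intro sum.cong refl card_msubsets_containing) auto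
  also have "\<dots> = m * ((n - 1) choose (m - 1))"
    using msubsetsD(2)[OF J] by simp
  finally show ?thesis .
qed

lemma sum_msubsets_sum:
  fixes a :: "nat \<Rightarrow> 'a :: comm_semiring_1"
  assumes m: "m \<ge> 1"
  shows "(\<Sum>J\<in>msubsets m n. \<Sum>j\<in>J. a j) = of_nat ((n - 1) choose (m - 1)) * (\<Sum>j=1..n. a j)"
proof -
  have "(\<Sum>j\<in>J. a j) = (\<Sum>j=1..n. if j \<in> J then a j else 0)" if "J \<in> msubsets m n" for J
  proof -
    have "J = {j\<in>{1..n}. j \<in> J}" using msubsetsD(3)[OF that] by auto
    then show ?thesis by (metis finite_atLeastAtMost sum.inter_filter)
  qed
  then have "(\<Sum>J\<in>msubsets m n. \<Sum>j\<in>J. a j) = (\<Sum>J\<in>msubsets m n. \<Sum>j=1..n. if j \<in> J then a j else 0)"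
    by (rule sum.cong[OF refl])
  also have "\<dots> = (\<Sum>j=1..n. \<Sum>J\<in>msubsets m n. if j \<in> J then a j else 0)"
    by (rule sum.swap)
  also have "\<dots> = (\<Sum>j=1..n. of_nat (card {J \<in> msubsets m n. j \<in> J}) * a j)"
    by (intro sum.cong refl, subst sum.inter_filter[symmetric]) simp_all
  also have "\<dots> = (\<Sum>j=1..n. of_nat ((n - 1) choose (m - 1)) * a j)"
    using m by (intro sum.cong refl) (simp add: card_msubsets_containing)
  finally show ?thesis by (simp add: sum_distrib_left)
qed

lemma bij_betw_nth_sorted_list_of_set:
  "finite J \<Longrightarrow> bij_betw ((!) (sorted_list_of_set J)) {..<card J} J"
  by (intro bij_betw_nth) simp_all

lemma strict_mono_bracket:
  fixes s :: "nat \<Rightarrow> nat"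
  assumes s: "strict_mono s"
  obtains \<kappa> where "\<And>n. s 0 \<le> n \<Longrightarrow> s (\<kappa> n) \<le> n \<and> n < s (Suc (\<kappa> n))"
    and "filterlim \<kappa> at_top sequentially"
proof
  define \<kappa> where "\<kappa> n = (GREATEST k. s k \<le> n)" for n
  have s_ge: "k \<le> s k" for k using s by (rule seq_suble)
  have le_\<kappa>: "k \<le> \<kappa> n" if "s k \<le> n" for k n
    unfolding \<kappa>_def by (rule Greatest_le_nat[of _ _ n]) (use that s_ge order_trans in auto)
  show "s (\<kappa> n) \<le> n \<and> n < s (Suc (\<kappa> n))" if "s 0 \<le> n" for n
  proof
    show "s (\<kappa> n) \<le> n"
      unfolding \<kappa>_def by (rule GreatestI_nat[of _ 0 n]) (use that s_ge order_trans in auto)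
    show "n < s (Suc (\<kappa> n))"
      using le_\<kappa>[of "Suc (\<kappa> n)" n] by linarith
  qed
  show "filterlim \<kappa> at_top sequentially"
    unfolding filterlim_at_top eventually_sequentially using le_\<kappa> by blast
qed

lemma tendsto_ratio_of_mono_subseq:
  fixes T N :: "nat \<Rightarrow> real" and s :: "nat \<Rightarrow> nat"
  assumes T_mono: "\<And>a b. a \<le> b \<Longrightarrow> T a \<le> T b" and T_nonneg: "\<And>n. 0 \<le> T n"
    and N_pos: "\<And>n. s 0 \<le> n \<Longrightarrow> N n > 0" and N_mono: "\<And>a b. s 0 \<le> a \<Longrightarrow> a \<le> b \<Longrightarrow> N a \<le> N b"
    and s: "strict_mono s"
    and lim: "(\<lambda>k. T (s k) / N (s k)) \<longlonglongrightarrow> \<theta>" and ratio: "(\<lambda>k. N (s (Suc k)) / N (s k)) \<longlonglongrightarrow> 1"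
  shows "(\<lambda>n. T n / N n) \<longlonglongrightarrow> \<theta>"
proof -
  obtain \<kappa> where \<kappa>: "\<And>n. s 0 \<le> n \<Longrightarrow> s (\<kappa> n) \<le> n \<and> n < s (Suc (\<kappa> n))"
    and \<kappa>_lim: "filterlim \<kappa> at_top sequentially"
    using strict_mono_bracket[OF s] by blast
  have s_ge: "s 0 \<le> s k" for k using s by (simp add: strict_mono_less_eq)
  define lower where "lower k = T (s k) / N (s k) / (N (s (Suc k)) / N (s k))" for k
  define upper where "upper k = T (s (Suc k)) / N (s (Suc k)) * (N (s (Suc k)) / N (s k))" for k
  have "lower \<longlonglongrightarrow> \<theta> / 1"
    unfolding lower_def by (intro tendsto_intros lim ratio) simp
  then have lower_lim: "(\<lambda>n. lower (\<kappa> n)) \<longlonglongrightarrow> \<theta>"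
    using filterlim_compose[OF _ \<kappa>_lim] by simp
  have "upper \<longlonglongrightarrow> \<theta> * 1"
    unfolding upper_def by (intro tendsto_intros ratio LIMSEQ_Suc[OF lim])
  then have upper_lim: "(\<lambda>n. upper (\<kappa> n)) \<longlonglongrightarrow> \<theta>"
    using filterlim_compose[OF _ \<kappa>_lim] by simp
  have bounds: "lower (\<kappa> n) \<le> T n / N n \<and> T n / N n \<le> upper (\<kappa> n)" if n: "s 0 \<le> n" for n
  proof -
    let ?a = "s (\<kappa> n)" and ?b = "s (Suc (\<kappa> n))"
    have pos: "N ?a > 0" "N ?b > 0" "N n > 0" using N_pos s_ge n by auto
    have "lower (\<kappa> n) = T ?a / N ?b" unfolding lower_def using pos by simp
    also have "\<dots> \<le> T n / N ?b" using T_mono \<kappa>[OF n] pos by (simp add: divide_right_mono)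
    also have "\<dots> \<le> T n / N n" using N_mono[OF n, of ?b] \<kappa>[OF n] pos T_nonneg[of n]
      by (intro divide_left_mono) auto
    finally have "lower (\<kappa> n) \<le> T n / N n" .
    have "T n / N n \<le> T ?b / N n" using T_mono \<kappa>[OF n] pos by (simp add: divide_right_mono)
    also have "\<dots> \<le> T ?b / N ?a" using N_mono[of ?a n] \<kappa>[OF n] s_ge pos T_nonneg[of ?b]
      by (intro divide_left_mono) auto
    also have "\<dots> = upper (\<kappa> n)" unfolding upper_def using pos by simp
    finally have "T n / N n \<le> upper (\<kappa> n)" .
    with \<open>lower (\<kappa> n) \<le> T n / N n\<close> show ?thesis by simp
  qed
  show ?thesis
    by (rule tendsto_sandwich[OF _ _ lower_lim upper_lim]) (use bounds in \<open>auto simp: eventually_sequentially\<close>)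
qed

lemma choose_square_ratio_tendsto_1:
  shows "(\<lambda>k. real ((Suc k + m)^2 choose m) / real ((k + m)^2 choose m)) \<longlonglongrightarrow> 1"
proof -
  have le: "m \<le> (k + m)^2" for k
    by (metis le_add2 le_square le_trans power2_eq_square)
  have eq: "real ((Suc k + m)^2 choose m) / real ((k + m)^2 choose m) =
      (\<Prod>i = 0..<m. ((real (Suc k) + real m)^2 - real i) / ((real k + real m)^2 - real i))" for k
  proof -
    have le2: "m \<le> (Suc k + m)^2" using le[of "Suc k"] by simp
    have "real ((Suc k + m)^2 choose m) / real ((k + m)^2 choose m) =
      (\<Prod>i = 0..<m. real ((Suc k + m)^2 - i) / real (m - i)) / (\<Prod>i = 0..<m. real ((k + m)^2 - i) / real (m - i))"
      using binomial_altdef_of_nat[OF le2, where 'a=real] binomial_altdef_of_nat[OF le[of k], where 'a=real] by simp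
    also have "\<dots> = (\<Prod>i = 0..<m. (real ((Suc k + m)^2 - i) / real (m - i)) / (real ((k + m)^2 - i) / real (m - i)))"
      by (rule prod_dividef[symmetric])
    also have "\<dots> = (\<Prod>i = 0..<m. ((real (Suc k) + real m)^2 - real i) / ((real k + real m)^2 - real i))"
    proof (rule prod.cong[OF refl])
      fix i assume i: "i \<in> {0..<m}"
      have "i \<le> (k+m)^2" "i \<le> (Suc k+m)^2" using i le[of k] le2 by auto
      then show "(real ((Suc k + m)^2 - i) / real (m - i)) / (real ((k + m)^2 - i) / real (m - i)) =
          ((real (Suc k) + real m)^2 - real i) / ((real k + real m)^2 - real i)"
        using i by (simp add: of_nat_diff)
    qed
    finally show ?thesis .
  qed
  have "(\<lambda>k. \<Prod>i = 0..<m. ((real (Suc k) + real m)^2 - real i) / ((real k + real m)^2 - real i)) \<longlonglongrightarrow> (\<Prod>i = 0..<m. 1)"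
  proof (rule tendsto_prod)
    fix i assume "i \<in> {0..<m}"
    show "(\<lambda>k. ((real (Suc k) + real m)^2 - real i) / ((real k + real m)^2 - real i)) \<longlonglongrightarrow> 1"
      by real_asymp
  qed
  then show ?thesis unfolding eq by simp
qed


lemma tendsto_of_truncations:
  fixes a :: "nat \<Rightarrow> real" and b c :: "nat \<Rightarrow> nat \<Rightarrow> real" and \<mu>K :: "nat \<Rightarrow> real"
  assumes split: "\<And>K n. a n = b K n + c K n" and c_nonneg: "\<And>K n. 0 \<le> c K n"
    and b_lim: "\<And>K. b K \<longlonglongrightarrow> \<mu>K K" and \<mu>K_le: "\<And>K. \<mu>K K \<le> \<mu>" and \<mu>K_lim: "\<mu>K \<longlonglongrightarrow> \<mu>"
    and c_small: "\<And>e. e > 0 \<Longrightarrow> \<exists>K. eventually (\<lambda>n. c K n \<le> e) sequentially"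
  shows "a \<longlonglongrightarrow> \<mu>"
proof (rule tendstoI)
  fix e :: real assume e: "e > 0"
  have "eventually (\<lambda>K. dist (\<mu>K K) \<mu> < e / 2) sequentially"
    using \<mu>K_lim e by (intro tendstoD) auto
  then obtain K1 where K1: "\<bar>\<mu>K K1 - \<mu>\<bar> < e / 2"
    by (auto simp: eventually_sequentially dist_real_def)
  obtain K2 where K2: "eventually (\<lambda>n. c K2 n \<le> e / 3) sequentially"
    using c_small e by (meson divide_pos_pos zero_less_numeral)
  have "eventually (\<lambda>n. dist (b K1 n) (\<mu>K K1) < e / 2) sequentially"
    "eventually (\<lambda>n. dist (b K2 n) (\<mu>K K2) < e / 3) sequentially"
    using b_lim e by (intro tendstoD; simp)+
  with K2 show "eventually (\<lambda>n. dist (a n) \<mu> < e) sequentially"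
  proof eventually_elim
    case (elim n)
    have "\<mu> - e < a n"
      using split[of n K1] c_nonneg[of K1 n] elim(2) K1 unfolding dist_real_def abs_less_iff by linarith
    moreover have "a n < \<mu> + e"
      using split[of n K2] elim(1,3) \<mu>K_le[of K2] unfolding dist_real_def abs_less_iff by linarith
    ultimately show ?case by (simp add: dist_real_def abs_less_iff)
  qed
qed

lemma ex_eventually_le_of_tendsto_0:
  fixes d :: "nat \<Rightarrow> nat \<Rightarrow> real"
  assumes "\<And>K. d K \<longlonglongrightarrow> \<tau> K" and "\<tau> \<longlonglongrightarrow> 0" and "e > 0"
  shows "\<exists>K. eventually (\<lambda>n. d K n \<le> e) sequentially"
proof -
  obtain K where "\<tau> K < e"
    using order_tendstoD(2)[OF assms(2,3)] by (auto simp: eventually_sequentially)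
  then have "eventually (\<lambda>n. d K n < e) sequentially"
    by (rule order_tendstoD(2)[OF assms(1)])
  then show ?thesis by (intro exI[of _ K]) (auto elim: eventually_mono)
qed

lemma tendsto_of_truncations_bounded:
  fixes a :: "nat \<Rightarrow> real" and b c d :: "nat \<Rightarrow> nat \<Rightarrow> real" and \<mu>K \<tau> :: "nat \<Rightarrow> real"
  assumes split: "\<And>K n. a n = b K n + c K n" and c_nonneg: "\<And>K n. 0 \<le> c K n"
    and b_lim: "\<And>K. b K \<longlonglongrightarrow> \<mu>K K" and \<mu>K_le: "\<And>K. \<mu>K K \<le> \<mu>" and \<mu>K_lim: "\<mu>K \<longlonglongrightarrow> \<mu>"
    and c_le: "\<And>K. eventually (\<lambda>n. c K n \<le> d K n) sequentially"
    and d_lim: "\<And>K. d K \<longlonglongrightarrow> \<tau> K" and \<tau>_lim: "\<tau> \<longlonglongrightarrow> 0"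
  shows "a \<longlonglongrightarrow> \<mu>"
proof (rule tendsto_of_truncations[OF split c_nonneg b_lim \<mu>K_le \<mu>K_lim])
  fix e :: real assume "e > 0"
  then obtain K where "eventually (\<lambda>n. d K n \<le> e) sequentially"
    using ex_eventually_le_of_tendsto_0[OF d_lim \<tau>_lim] by blast
  with c_le[of K] have "eventually (\<lambda>n. c K n \<le> e) sequentially"
    by eventually_elim simp
  then show "\<exists>K. eventually (\<lambda>n. c K n \<le> e) sequentially" ..
qed

lemma Max_partial_sums_diff_shift_le:
  fixes z :: "nat \<Rightarrow> real"
  shows "Max ((\<lambda>j. \<Sum>l<j. z l) ` {..n}) - Max ((\<lambda>j. \<Sum>l<j. z (Suc l)) ` {..n})
    \<le> z 0 * of_bool (0 < Max ((\<lambda>j. \<Sum>l<j. z l) ` {..n}))"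
proof (cases "0 < Max ((\<lambda>j. \<Sum>l<j. z l) ` {..n})")
  case True
  have "Max ((\<lambda>j. \<Sum>l<j. z l) ` {..n}) \<in> (\<lambda>j. \<Sum>l<j. z l) ` {..n}"
    by (rule Max_in) auto
  then obtain j where j: "j \<in> {..n}" "Max ((\<lambda>j. \<Sum>l<j. z l) ` {..n}) = (\<Sum>l<j. z l)"
    by blast
  with True obtain j' where j': "j = Suc j'" by (cases j) auto
  have "(\<Sum>l<j. z l) = z 0 + (\<Sum>l<j'. z (Suc l))"
    unfolding j' by (rule sum.lessThan_Suc_shift)
  moreover have "(\<Sum>l<j'. z (Suc l)) \<le> Max ((\<lambda>j. \<Sum>l<j. z (Suc l)) ` {..n})"
    using j j' by (intro Max_ge) auto
  ultimately have "Max ((\<lambda>j. \<Sum>l<j. z l) ` {..n}) - Max ((\<lambda>j. \<Sum>l<j. z (Suc l)) ` {..n}) \<le> z 0"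
    using j by linarith
  then show ?thesis using True by (simp only: of_bool_eq mult_1_right)
next
  case False
  have "0 \<le> Max ((\<lambda>j. \<Sum>l<j. z (Suc l)) ` {..n})"
    by (subst Max_ge_iff) (auto intro!: bexI[of _ 0])
  then have "Max ((\<lambda>j. \<Sum>l<j. z l) ` {..n}) - Max ((\<lambda>j. \<Sum>l<j. z (Suc l)) ` {..n}) \<le> 0"
    using False by linarith
  then show ?thesis using False by (simp only: of_bool_eq mult_zero_right)
qed

lemma abs_Max_partial_sums_le:
  fixes z :: "nat \<Rightarrow> real"
  shows "\<bar>Max ((\<lambda>j. \<Sum>l<j. z l) ` {..n})\<bar> \<le> (\<Sum>l<n. \<bar>z l\<bar>)"
proof -
  have "Max ((\<lambda>j. \<Sum>l<j. z l) ` {..n}) \<in> (\<lambda>j. \<Sum>l<j. z l) ` {..n}"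
    by (rule Max_in) auto
  then obtain j where j: "j \<in> {..n}" "Max ((\<lambda>j. \<Sum>l<j. z l) ` {..n}) = (\<Sum>l<j. z l)"
    by blast
  have "\<bar>\<Sum>l<j. z l\<bar> \<le> (\<Sum>l<j. \<bar>z l\<bar>)" by (rule sum_abs)
  also have "\<dots> \<le> (\<Sum>l<n. \<bar>z l\<bar>)" using j by (intro sum_mono2) auto
  finally show ?thesis using j by simp
qed

lemma (in prob_space) AE_tendsto_of_summable_tail_prob:
  fixes Y :: "nat \<Rightarrow> 'a \<Rightarrow> real"
  assumes [measurable]: "\<And>k. Y k \<in> borel_measurable M"
    and summable: "\<And>e. e > 0 \<Longrightarrow> summable (\<lambda>k. prob {\<omega> \<in> space M. e \<le> \<bar>Y k \<omega> - \<theta>\<bar>})"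
  shows "AE \<omega> in M. (\<lambda>k. Y k \<omega>) \<longlonglongrightarrow> \<theta>"
proof -
  have "AE \<omega> in M. \<forall>r::nat. eventually
      (\<lambda>k. \<omega> \<in> space M - {\<omega> \<in> space M. inverse (Suc r) \<le> \<bar>Y k \<omega> - \<theta>\<bar>}) sequentially"
    unfolding AE_all_countable
    by (intro allI borel_cantelli_AE1 summable) (auto simp: less_top[symmetric])
  then show ?thesis
  proof eventually_elim
    case (elim \<omega>)
    show ?case
    proof (rule tendstoI)
      fix e :: real assume "e > 0"
      then obtain r where r: "inverse (Suc r) < e" using reals_Archimedean by blast
      show "eventually (\<lambda>k. dist (Y k \<omega>) \<theta> < e) sequentially"
        using elim[rule_format, of r] r by (auto elim!: eventually_mono simp: dist_real_def)
    qed
  qed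
qed

lemma (in prob_space) mult_prob_le_expectation:
  fixes f :: "'a \<Rightarrow> real"
  assumes A [measurable]: "A \<in> sets M" and integrable_f: "integrable M f"
    and f_nonneg: "\<And>\<omega>. \<omega> \<in> space M \<Longrightarrow> 0 \<le> f \<omega>"
    and excess: "0 \<le> expectation (\<lambda>\<omega>. (f \<omega> - lam) * indicator A \<omega>)"
  shows "lam * prob A \<le> expectation f"
proof -
  have "integrable M (\<lambda>\<omega>. lam * indicator A \<omega> :: real)"
    by (intro integrable_mult_right integrable_real_indicator) (auto simp: less_top[symmetric])
  then have "expectation (\<lambda>\<omega>. (f \<omega> - lam) * indicator A \<omega>) =
      expectation (\<lambda>\<omega>. f \<omega> * indicator A \<omega>) - lam * prob A"
    using integrable_real_mult_indicator[OF A integrable_f]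
    by (simp add: left_diff_distrib Bochner_Integration.integral_diff)
  moreover have "expectation (\<lambda>\<omega>. f \<omega> * indicator A \<omega>) \<le> expectation f"
    using integrable_f by (intro integral_mono integrable_real_mult_indicator A)
      (auto simp: indicator_def f_nonneg)
  ultimately show ?thesis using excess by linarith
qed

lemma (in prob_space) expectation_excess_tendsto_0:
  fixes Y :: "'a \<Rightarrow> real"
  assumes integrable_Y: "integrable M Y" and c: "c > 0"
  shows "(\<lambda>K. expectation (\<lambda>\<omega>. max (Y \<omega> - real K / c) 0)) \<longlonglongrightarrow> 0"
proof -
  have "(\<lambda>K. expectation (\<lambda>\<omega>. max (Y \<omega> - real K / c) 0)) \<longlonglongrightarrow> expectation (\<lambda>\<omega>. 0)"
  proof (rule integral_dominated_convergence[where w="\<lambda>\<omega>. \<bar>Y \<omega>\<bar>"])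
    show "AE \<omega> in M. norm (max (Y \<omega> - real K / c) 0) \<le> \<bar>Y \<omega>\<bar>" for K
    proof (rule AE_I2)
      fix \<omega>
      have "0 \<le> real K / c" using c by simp
      then show "norm (max (Y \<omega> - real K / c) 0) \<le> \<bar>Y \<omega>\<bar>" by auto
    qed
    show "AE \<omega> in M. (\<lambda>K. max (Y \<omega> - real K / c) 0) \<longlonglongrightarrow> 0"
    proof (rule AE_I2)
      fix \<omega>
      obtain K0 :: nat where "c * Y \<omega> \<le> real K0" using real_arch_simple by blast
      then have "eventually (\<lambda>K. max (Y \<omega> - real K / c) 0 = 0) sequentially"
        unfolding eventually_sequentially using c by (intro exI[of _ K0]) (auto simp: field_simps)
      then show "(\<lambda>K. max (Y \<omega> - real K / c) 0) \<longlonglongrightarrow> 0" by (rule tendsto_eventually)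
    qed
  qed (use integrable_Y in simp_all)
  then show ?thesis by simp
qed

section \<open>IID sequences and U-statistics\<close>

locale iid_seq = prob_space +
  fixes X :: "nat \<Rightarrow> 'a \<Rightarrow> real"
  assumes indep: "indep_vars (\<lambda>_. borel) X {1..}"
    and ident: "\<And>k. k \<ge> 1 \<Longrightarrow> distr M borel (X k) = distr M borel (X 1)"
begin

lemma measurable_X [measurable]: "k \<ge> 1 \<Longrightarrow> X k \<in> borel_measurable M"
  using indep unfolding indep_vars_def by auto

lemma distr_reindex_eq_PiM:
  assumes I: "I \<noteq> {}" "finite I" and inj: "inj_on \<sigma> I" and sub: "\<sigma> ` I \<subseteq> {1..}"
  shows "distr M (PiM I (\<lambda>_. borel)) (\<lambda>\<omega>. \<lambda>l\<in>I. X (\<sigma> l) \<omega>) = PiM I (\<lambda>_. distr M borel (X 1))"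
proof -
  define K where "K = \<sigma> ` I"
  have K: "K \<noteq> {}" "K \<subseteq> {1..}" using I sub by (auto simp: K_def)
  have rv_K: "\<And>k. k \<in> K \<Longrightarrow> random_variable borel (X k)" using K by auto
  have "distr M (PiM K (\<lambda>_. borel)) (\<lambda>\<omega>. \<lambda>k\<in>K. X k \<omega>) = PiM K (\<lambda>k. distr M borel (X k))"
    using indep_vars_iff_distr_eq_PiM'[OF K(1) rv_K] indep_vars_subset[OF indep K(2)] by simp
  also have "\<dots> = PiM K (\<lambda>_. distr M borel (X 1))"
    using K by (intro PiM_cong refl ident) auto
  finally have law_K: "distr M (PiM K (\<lambda>_. borel)) (\<lambda>\<omega>. \<lambda>k\<in>K. X k \<omega>) = PiM K (\<lambda>_. distr M borel (X 1))" .
  have meas_K: "(\<lambda>\<omega>. \<lambda>k\<in>K. X k \<omega>) \<in> measurable M (PiM K (\<lambda>_. borel))"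
    using K by (intro measurable_restrict) auto
  have meas_reindex: "(\<lambda>r. \<lambda>l\<in>I. r (\<sigma> l)) \<in> measurable (PiM K (\<lambda>_. borel)) (PiM I (\<lambda>_. borel))"
    by (intro measurable_restrict measurable_component_singleton) (auto simp: K_def)
  have "distr M (PiM I (\<lambda>_. borel)) (\<lambda>\<omega>. \<lambda>l\<in>I. X (\<sigma> l) \<omega>) =
      distr (distr M (PiM K (\<lambda>_. borel)) (\<lambda>\<omega>. \<lambda>k\<in>K. X k \<omega>)) (PiM I (\<lambda>_. borel)) (\<lambda>r. \<lambda>l\<in>I. r (\<sigma> l))"
    by (subst distr_distr[OF meas_reindex meas_K], intro distr_cong refl)
      (auto intro: restrict_ext simp: K_def)
  also have "\<dots> = distr (PiM K (\<lambda>_. distr M borel (X 1))) (PiM I (\<lambda>_. distr M borel (X 1))) (\<lambda>r. \<lambda>l\<in>I. r (\<sigma> l))"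
    unfolding law_K by (intro distr_cong refl sets_PiM_cong) simp_all
  also have "\<dots> = PiM I (\<lambda>_. distr M borel (X 1))"
    using distr_PiM_reindex[of K "\<lambda>_. distr M borel (X 1)" \<sigma> I] inj
    by (auto simp: K_def prob_space_distr)
  finally show ?thesis .
qed

definition kernel_mean :: "nat \<Rightarrow> ((nat \<Rightarrow> real) \<Rightarrow> real) \<Rightarrow> real" where
  "kernel_mean m g = (\<integral>v. g v \<partial>PiM {..<m} (\<lambda>_. distr M borel (X 1)))"

lemma
  assumes m: "m \<ge> 1" and inj: "inj_on \<sigma> {..<m}" and sub: "\<sigma> ` {..<m} \<subseteq> {1..}"
    and g [measurable]: "g \<in> borel_measurable (PiM {..<m} (\<lambda>_. borel))"
  shows integrable_reindex_iff: "integrable M (\<lambda>\<omega>. g (\<lambda>l\<in>{..<m}. X (\<sigma> l) \<omega>)) \<longleftrightarrow>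
      integrable (PiM {..<m} (\<lambda>_. distr M borel (X 1))) g"
    and expectation_reindex: "expectation (\<lambda>\<omega>. g (\<lambda>l\<in>{..<m}. X (\<sigma> l) \<omega>)) = kernel_mean m g"
proof -
  have law: "distr M (PiM {..<m} (\<lambda>_. borel)) (\<lambda>\<omega>. \<lambda>l\<in>{..<m}. X (\<sigma> l) \<omega>) =
      PiM {..<m} (\<lambda>_. distr M borel (X 1))"
    using m inj sub by (intro distr_reindex_eq_PiM) (auto simp: lessThan_empty_iff)
  have meas: "(\<lambda>\<omega>. \<lambda>l\<in>{..<m}. X (\<sigma> l) \<omega>) \<in> measurable M (PiM {..<m} (\<lambda>_. borel))"
    using sub by (intro measurable_restrict) auto
  show "integrable M (\<lambda>\<omega>. g (\<lambda>l\<in>{..<m}. X (\<sigma> l) \<omega>)) \<longleftrightarrow>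
      integrable (PiM {..<m} (\<lambda>_. distr M borel (X 1))) g"
    using integrable_distr_eq[OF meas g] unfolding law by simp
  show "expectation (\<lambda>\<omega>. g (\<lambda>l\<in>{..<m}. X (\<sigma> l) \<omega>)) = kernel_mean m g"
    using integral_distr[OF meas g] unfolding law kernel_mean_def by simp
qed

lemma integrable_comp_X:
  fixes f :: "real \<Rightarrow> real"
  assumes [measurable]: "f \<in> borel_measurable borel" and "integrable M (\<lambda>\<omega>. f (X 1 \<omega>))" "k \<ge> 1"
  shows "integrable M (\<lambda>\<omega>. f (X k \<omega>))"
proof -
  have "integrable (distr M borel (X 1)) f" using assms by (subst integrable_distr_eq) auto
  then have "integrable (distr M borel (X k)) f" using ident[of k] assms by simp
  then show ?thesis using assms by (subst (asm) integrable_distr_eq) auto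
qed

(* For J = {j_1 < ... < j_m} this is the vector (X j_1, ..., X j_m), indexed from 0. *)
definition subsample :: "nat \<Rightarrow> nat set \<Rightarrow> 'a \<Rightarrow> nat \<Rightarrow> real" where
  "subsample m J \<omega> = (\<lambda>l\<in>{..<m}. X (sorted_list_of_set J ! l) \<omega>)"

lemma bij_betw_sorted_msubset:
  "J \<in> msubsets m n \<Longrightarrow> bij_betw ((!) (sorted_list_of_set J)) {..<m} J"
  using bij_betw_nth_sorted_list_of_set msubsetsD by metis

lemma sorted_msubset_nth_ge_1:
  "J \<in> msubsets m n \<Longrightarrow> l < m \<Longrightarrow> sorted_list_of_set J ! l \<ge> 1"
  using bij_betw_apply[OF bij_betw_sorted_msubset] msubsetsD(3) by fastforce

lemma measurable_subsample [measurable]: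
  "J \<in> msubsets m n \<Longrightarrow> subsample m J \<in> measurable M (PiM {..<m} (\<lambda>_. borel))"
  unfolding subsample_def by (intro measurable_restrict) (auto dest: sorted_msubset_nth_ge_1)

lemma expectation_subsample:
  assumes J: "J \<in> msubsets m n" and m: "m \<ge> 1"
    and g: "g \<in> borel_measurable (PiM {..<m} (\<lambda>_. borel))"
  shows "expectation (\<lambda>\<omega>. g (subsample m J \<omega>)) = kernel_mean m g"
  using expectation_reindex[OF m _ _ g] bij_betw_imp_inj_on[OF bij_betw_sorted_msubset[OF J]]
    sorted_msubset_nth_ge_1[OF J]
  unfolding subsample_def by auto

lemma sum_subsample:
  assumes "J \<in> msubsets m n"
  shows "(\<Sum>l<m. h (subsample m J \<omega> l)) = (\<Sum>j\<in>J. h (X j \<omega>))"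
  using sum.reindex_bij_betw[OF bij_betw_sorted_msubset[OF assms], of "\<lambda>j. h (X j \<omega>)"]
  by (simp add: subsample_def)

lemma image_subsample:
  assumes "J \<in> msubsets m n"
  shows "subsample m J \<omega> ` {..<m} = (\<lambda>k. X k \<omega>) ` J"
proof -
  have "subsample m J \<omega> ` {..<m} = (\<lambda>k. X k \<omega>) ` ((!) (sorted_list_of_set J) ` {..<m})"
    by (auto simp: subsample_def)
  then show ?thesis using bij_betw_imp_surj_on[OF bij_betw_sorted_msubset[OF assms]] by simp
qed

lemma indep_subsample:
  assumes J: "J \<in> msubsets m n" and J': "J' \<in> msubsets m n'" and disj: "J \<inter> J' = {}"
    and [measurable]: "\<phi> \<in> borel_measurable (PiM {..<m} (\<lambda>_. borel))"
      "\<psi> \<in> borel_measurable (PiM {..<m} (\<lambda>_. borel))"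
  shows "indep_var borel (\<lambda>\<omega>. \<phi> (subsample m J \<omega>)) borel (\<lambda>\<omega>. \<psi> (subsample m J' \<omega>))"
proof -
  define select where "select (K :: nat set) (r :: nat \<Rightarrow> real) = (\<lambda>l\<in>{..<m}. r (sorted_list_of_set K ! l))" for K r
  have meas_select: "select K \<in> measurable (PiM K (\<lambda>_. borel)) (PiM {..<m} (\<lambda>_. borel))"
    if "K \<in> msubsets m n''" for K n''
    using bij_betw_apply[OF bij_betw_sorted_msubset[OF that]] unfolding select_def
    by (intro measurable_restrict measurable_component_singleton) auto
  have subsample_eq: "subsample m K \<omega> = select K (restrict (\<lambda>i. X i \<omega>) K)"
    if "K \<in> msubsets m n''" for K n'' \<omega>
    using bij_betw_apply[OF bij_betw_sorted_msubset[OF that]]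
    unfolding select_def subsample_def by (intro restrict_ext) auto
  have "indep_var (PiM J (\<lambda>_. borel)) (\<lambda>\<omega>. restrict (\<lambda>i. X i \<omega>) J)
      (PiM J' (\<lambda>_. borel)) (\<lambda>\<omega>. restrict (\<lambda>i. X i \<omega>) J')"
    using msubsetsD[OF J] msubsetsD[OF J'] by (intro indep_var_restrict[OF indep disj]) auto
  from indep_var_compose[OF this, of "\<phi> \<circ> select J" borel "\<psi> \<circ> select J'" borel]
  show ?thesis
    using meas_select[OF J] meas_select[OF J'] by (simp add: comp_def subsample_eq[OF J] subsample_eq[OF J'])
qed

definition ustat_sum :: "nat \<Rightarrow> ((nat \<Rightarrow> real) \<Rightarrow> real) \<Rightarrow> nat \<Rightarrow> 'a \<Rightarrow> real" where
  "ustat_sum m g n \<omega> = (\<Sum>J\<in>msubsets m n. g (subsample m J \<omega>))"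

definition ustat :: "nat \<Rightarrow> ((nat \<Rightarrow> real) \<Rightarrow> real) \<Rightarrow> nat \<Rightarrow> 'a \<Rightarrow> real" where
  "ustat m g n \<omega> = ustat_sum m g n \<omega> / real (n choose m)"

end

section \<open>U-statistics with bounded kernels\<close>

locale iid_bounded_kernel = iid_seq +
  fixes m :: nat and g :: "(nat \<Rightarrow> real) \<Rightarrow> real" and B :: real
  assumes m_pos: "m \<ge> 1"
    and measurable_g [measurable]: "g \<in> borel_measurable (PiM {..<m} (\<lambda>_. borel))"
    and g_bounds: "\<And>v. 0 \<le> g v \<and> g v \<le> B"
begin

lemma integrable_g_subsample: "J \<in> msubsets m n \<Longrightarrow> integrable M (\<lambda>\<omega>. g (subsample m J \<omega>))"
  by (rule integrable_const_bound[where B=B]) (use g_bounds in auto)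

lemma expectation_g_subsample:
  "J \<in> msubsets m n \<Longrightarrow> expectation (\<lambda>\<omega>. g (subsample m J \<omega>)) = kernel_mean m g"
  using expectation_subsample m_pos measurable_g by blast

lemma kernel_mean_bounds: "0 \<le> kernel_mean m g \<and> kernel_mean m g \<le> B"
proof -
  note J = atLeastAtMost_in_msubsets[of m]
  have "0 \<le> expectation (\<lambda>\<omega>. g (subsample m {1..m} \<omega>))"
    by (rule integral_nonneg_AE) (use g_bounds in auto)
  moreover have "expectation (\<lambda>\<omega>. g (subsample m {1..m} \<omega>)) \<le> B"
    by (rule integral_le_const[OF integrable_g_subsample[OF J]]) (use g_bounds in auto)
  ultimately show ?thesis unfolding expectation_g_subsample[OF J] by simp
qed

lemma B_nonneg: "0 \<le> B"
  using g_bounds[of undefined] by linarith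

lemma abs_centered_g_product_le: "\<bar>(g v - kernel_mean m g) * (g w - kernel_mean m g)\<bar> \<le> B\<^sup>2"
proof -
  have "\<bar>g u - kernel_mean m g\<bar> \<le> B" for u
    using g_bounds[of u] kernel_mean_bounds by auto
  then have "\<bar>g v - kernel_mean m g\<bar> * \<bar>g w - kernel_mean m g\<bar> \<le> B * B"
    using B_nonneg by (intro mult_mono) auto
  then show ?thesis by (simp add: abs_mult power2_eq_square)
qed

lemma integrable_centered_g_product:
  assumes "J \<in> msubsets m n" "J' \<in> msubsets m n"
  shows "integrable M (\<lambda>\<omega>. (g (subsample m J \<omega>) - kernel_mean m g) * (g (subsample m J' \<omega>) - kernel_mean m g))"
  by (rule integrable_const_bound[where B="B\<^sup>2"]) (use assms abs_centered_g_product_le in auto)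

lemma covariance_g_subsample_le:
  assumes J: "J \<in> msubsets m n" and J': "J' \<in> msubsets m n"
  shows "expectation (\<lambda>\<omega>. (g (subsample m J \<omega>) - kernel_mean m g) * (g (subsample m J' \<omega>) - kernel_mean m g))
      \<le> (if J \<inter> J' = {} then 0 else B\<^sup>2)"
proof (cases "J \<inter> J' = {}")
  case True
  have indep: "indep_var borel (\<lambda>\<omega>. g (subsample m J \<omega>) - kernel_mean m g)
      borel (\<lambda>\<omega>. g (subsample m J' \<omega>) - kernel_mean m g)"
    using J J' True by (intro indep_subsample) auto
  have integrable: "integrable M (\<lambda>\<omega>. g (subsample m K \<omega>) - kernel_mean m g)"
    and centered: "expectation (\<lambda>\<omega>. g (subsample m K \<omega>) - kernel_mean m g) = 0"
    if "K \<in> msubsets m n" for K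
    using integrable_g_subsample[OF that] expectation_g_subsample[OF that] by (simp_all add: prob_space)
  show ?thesis
    using indep_var_lebesgue_integral[OF indep integrable[OF J] integrable[OF J']]
      centered[OF J] centered[OF J'] True by simp
next
  case False
  have "expectation (\<lambda>\<omega>. (g (subsample m J \<omega>) - kernel_mean m g) * (g (subsample m J' \<omega>) - kernel_mean m g))
      \<le> B\<^sup>2"
    using abs_centered_g_product_le abs_le_D1
    by (intro integral_le_const integrable_centered_g_product[OF J J'] AE_I2) blast
  with False show ?thesis by simp
qed

(* Subsamples with disjoint index sets are independent, so only the index sets meeting J count. *)
lemma sum_covariance_g_subsample_le:
  assumes J: "J \<in> msubsets m n"
  shows "(\<Sum>J'\<in>msubsets m n. expectation (\<lambda>\<omega>. (g (subsample m J \<omega>) - kernel_mean m g) *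
      (g (subsample m J' \<omega>) - kernel_mean m g))) \<le> B\<^sup>2 * real (m * ((n - 1) choose (m - 1)))"
proof -
  have "(\<Sum>J'\<in>msubsets m n. expectation (\<lambda>\<omega>. (g (subsample m J \<omega>) - kernel_mean m g) *
      (g (subsample m J' \<omega>) - kernel_mean m g)))
      \<le> (\<Sum>J'\<in>msubsets m n. if J \<inter> J' = {} then 0 else B\<^sup>2)"
    using J by (intro sum_mono covariance_g_subsample_le)
  also have "\<dots> = B\<^sup>2 * real (card {J' \<in> msubsets m n. J \<inter> J' \<noteq> {}})"
    by (simp add: sum.If_cases Int_def)
  also have "\<dots> \<le> B\<^sup>2 * real (m * ((n - 1) choose (m - 1)))"
    using card_msubsets_meeting_le[OF J m_pos] by (intro mult_left_mono of_nat_mono) simp_all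
  finally show ?thesis .
qed


lemma measurable_ustat [measurable]: "(\<lambda>\<omega>. ustat m g n \<omega>) \<in> borel_measurable M"
  unfolding ustat_def ustat_sum_def by measurable

lemma ustat_sum_mono: "n \<le> n' \<Longrightarrow> ustat_sum m g n \<omega> \<le> ustat_sum m g n' \<omega>"
  unfolding ustat_sum_def using g_bounds by (intro sum_mono2 msubsets_mono) auto

lemma ustat_bounds: "0 \<le> ustat m g n \<omega> \<and> ustat m g n \<omega> \<le> B"
proof -
  have "0 \<le> ustat_sum m g n \<omega>" "ustat_sum m g n \<omega> \<le> real (n choose m) * B"
    unfolding ustat_sum_def using g_bounds sum_mono[of "msubsets m n" _ "\<lambda>_. B"]
    by (auto intro: sum_nonneg simp: card_msubsets)
  then show ?thesis
    using B_nonneg by (cases "n choose m = 0") (auto simp: ustat_def field_simps)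
qed

lemma expectation_ustat: "n \<ge> m \<Longrightarrow> expectation (ustat m g n) = kernel_mean m g"
  unfolding ustat_def ustat_sum_def
  by (simp add: Bochner_Integration.integral_sum integrable_g_subsample expectation_g_subsample
      card_msubsets)

lemma variance_ustat_le:
  assumes n: "n \<ge> m"
  shows "expectation (\<lambda>\<omega>. (ustat m g n \<omega> - kernel_mean m g)\<^sup>2) \<le> B\<^sup>2 * (real m)\<^sup>2 / real n"
proof -
  define Z where "Z J \<omega> = g (subsample m J \<omega>) - kernel_mean m g" for J \<omega>
  define N where "N = real (n choose m)"
  define C where "C = real ((n - 1) choose (m - 1))"
  have N_pos: "N > 0" using n by (simp add: N_def)
  have square: "(ustat m g n \<omega> - kernel_mean m g)\<^sup>2 =
      (\<Sum>J\<in>msubsets m n. \<Sum>J'\<in>msubsets m n. Z J \<omega> * Z J' \<omega>) / N\<^sup>2" for \<omega>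
  proof -
    have "ustat m g n \<omega> - kernel_mean m g = (\<Sum>J\<in>msubsets m n. Z J \<omega>) / N"
      using N_pos
      by (simp add: ustat_def ustat_sum_def Z_def sum_subtractf card_msubsets N_def field_simps)
    then show ?thesis by (simp add: power_divide power2_eq_square sum_product)
  qed
  have integrable: "integrable M (\<lambda>\<omega>. Z J \<omega> * Z J' \<omega>)"
    if "J \<in> msubsets m n" "J' \<in> msubsets m n" for J J'
    using integrable_centered_g_product[OF that] by (simp add: Z_def)
  have "expectation (\<lambda>\<omega>. (ustat m g n \<omega> - kernel_mean m g)\<^sup>2) =
      (\<Sum>J\<in>msubsets m n. \<Sum>J'\<in>msubsets m n. expectation (\<lambda>\<omega>. Z J \<omega> * Z J' \<omega>)) / N\<^sup>2"
    unfolding square by (simp add: Bochner_Integration.integral_sum integrable integrable_sum)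
  also have "\<dots> \<le> (\<Sum>J\<in>msubsets m n. B\<^sup>2 * (real m * C)) / N\<^sup>2"
    using sum_covariance_g_subsample_le
    by (intro divide_right_mono sum_mono) (simp_all add: Z_def C_def)
  also have "\<dots> = B\<^sup>2 * real m * C / N"
    using N_pos by (simp add: card_msubsets N_def power2_eq_square)
  also have "\<dots> = B\<^sup>2 * (real m)\<^sup>2 / real n"
  proof -
    have "real m * N = real n * C"
      unfolding N_def C_def using times_binomial_minus1_eq[of m n] m_pos
      by (metis of_nat_mult not_one_le_zero not_gr_zero)
    then show ?thesis using N_pos n m_pos by (simp add: field_simps power2_eq_square)
  qed
  finally show ?thesis .
qed

lemma prob_ustat_deviation_le:
  assumes n: "n \<ge> m" and e: "e > 0"
  shows "prob {\<omega> \<in> space M. e \<le> \<bar>ustat m g n \<omega> - kernel_mean m g\<bar>} \<le> B\<^sup>2 * (real m)\<^sup>2 / real n / e\<^sup>2"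
proof -
  have "integrable M (\<lambda>\<omega>. (ustat m g n \<omega>)\<^sup>2)"
    using ustat_bounds B_nonneg
    by (intro integrable_const_bound[where B="B\<^sup>2"]) (auto simp: abs_le_square_iff)
  from Chebyshev_inequality[OF _ this e]
  have "prob {\<omega> \<in> space M. e \<le> \<bar>ustat m g n \<omega> - kernel_mean m g\<bar>}
      \<le> expectation (\<lambda>\<omega>. (ustat m g n \<omega> - kernel_mean m g)\<^sup>2) / e\<^sup>2"
    by (simp add: expectation_ustat[OF n])
  also have "\<dots> \<le> B\<^sup>2 * (real m)\<^sup>2 / real n / e\<^sup>2"
    by (intro divide_right_mono variance_ustat_le[OF n]) simp
  finally show ?thesis .
qed

(* The Chebyshev bound O(1/n) is summable along the squares. *)
lemma AE_tendsto_ustat_square_subseq: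
  "AE \<omega> in M. (\<lambda>k. ustat m g ((k + m)\<^sup>2) \<omega>) \<longlonglongrightarrow> kernel_mean m g"
proof (rule AE_tendsto_of_summable_tail_prob)
  fix e :: real assume e: "e > 0"
  define c where "c = B\<^sup>2 * (real m)\<^sup>2 / e\<^sup>2"
  have "m \<le> (k + m)\<^sup>2" for k
    by (metis le_add2 le_square le_trans power2_eq_square)
  then have "prob {\<omega> \<in> space M. e \<le> \<bar>ustat m g ((k + m)\<^sup>2) \<omega> - kernel_mean m g\<bar>}
      \<le> c * inverse ((real k + real m)\<^sup>2)" for k
    using prob_ustat_deviation_le[OF _ e, of "(k + m)\<^sup>2"] by (simp add: c_def field_simps)
  also have "c * inverse ((real k + real m)\<^sup>2) \<le> c * inverse ((real (Suc k))\<^sup>2)" for k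
    using m_pos by (intro mult_left_mono le_imp_inverse_le power_mono) (auto simp: c_def)
  finally show "summable (\<lambda>k. prob {\<omega> \<in> space M. e \<le> \<bar>ustat m g ((k + m)\<^sup>2) \<omega> - kernel_mean m g\<bar>})"
    by (intro summable_comparison_test'[OF summable_mult[OF summable_Suc_iff[THEN iffD2,
          OF inverse_power_summable]]]) auto
qed simp

lemma AE_tendsto_ustat: "AE \<omega> in M. (\<lambda>n. ustat m g n \<omega>) \<longlonglongrightarrow> kernel_mean m g"
  using AE_tendsto_ustat_square_subseq
proof eventually_elim
  case (elim \<omega>)
  show ?case
    unfolding ustat_def
  proof (rule tendsto_ratio_of_mono_subseq[where s="\<lambda>k. (k + m)\<^sup>2"])
    show "strict_mono (\<lambda>k. (k + m)\<^sup>2)" by (intro strict_monoI power_strict_mono) auto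
    show "(\<lambda>k. real ((Suc k + m)\<^sup>2 choose m) / real ((k + m)\<^sup>2 choose m)) \<longlonglongrightarrow> 1"
      by (rule choose_square_ratio_tendsto_1)
  qed (use elim ustat_sum_mono g_bounds in \<open>auto simp: ustat_def ustat_sum_def sum_nonneg
      binomial_right_mono power2_eq_square intro: le_trans[OF le_square]\<close>)
qed

end

section \<open>The strong law of large numbers\<close>

context iid_seq
begin

lemma
  fixes G :: "(nat \<Rightarrow> real) \<Rightarrow> real"
  assumes n: "n \<ge> 1" and s: "s \<ge> 1" and t: "t \<ge> 1"
    and G [measurable]: "G \<in> borel_measurable (PiM {..<n} (\<lambda>_. borel))"
  shows integrable_shift_iff: "integrable M (\<lambda>\<omega>. G (\<lambda>l\<in>{..<n}. X (l + s) \<omega>)) \<longleftrightarrow>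
      integrable M (\<lambda>\<omega>. G (\<lambda>l\<in>{..<n}. X (l + t) \<omega>))"
    and expectation_shift_eq: "expectation (\<lambda>\<omega>. G (\<lambda>l\<in>{..<n}. X (l + s) \<omega>)) =
      expectation (\<lambda>\<omega>. G (\<lambda>l\<in>{..<n}. X (l + t) \<omega>))"
proof -
  have reindex: "inj_on (\<lambda>l. l + u) {..<n}" "(\<lambda>l. l + u) ` {..<n} \<subseteq> {1..}" if "u \<ge> 1" for u
    using that by auto
  show "integrable M (\<lambda>\<omega>. G (\<lambda>l\<in>{..<n}. X (l + s) \<omega>)) \<longleftrightarrow>
      integrable M (\<lambda>\<omega>. G (\<lambda>l\<in>{..<n}. X (l + t) \<omega>))"
    using integrable_reindex_iff[OF n reindex[OF s] G] integrable_reindex_iff[OF n reindex[OF t] G] by simp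
  show "expectation (\<lambda>\<omega>. G (\<lambda>l\<in>{..<n}. X (l + s) \<omega>)) =
      expectation (\<lambda>\<omega>. G (\<lambda>l\<in>{..<n}. X (l + t) \<omega>))"
    using expectation_reindex[OF n reindex[OF s] G] expectation_reindex[OF n reindex[OF t] G] by simp
qed

(* Garsia's argument: G, the largest partial sum of the f (X k) - lam, has the same mean on the
   blocks (X 1, ..., X n) and (X 2, ..., X (n + 1)), while pointwise the difference of its two
   values is at most f (X 1) - lam on the event and at most 0 off it. *)
lemma maximal_inequality_finite:
  fixes f :: "real \<Rightarrow> real"
  assumes [measurable]: "f \<in> borel_measurable borel" and f_nonneg: "\<And>x. 0 \<le> f x"
    and integrable_f: "integrable M (\<lambda>\<omega>. f (X 1 \<omega>))"
  shows "lam * prob {\<omega> \<in> space M. \<exists>j\<le>n. real j * lam < (\<Sum>k=1..j. f (X k \<omega>))}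
    \<le> expectation (\<lambda>\<omega>. f (X 1 \<omega>))"
proof (cases "n = 0")
  case True
  then show ?thesis by (simp add: integral_nonneg_AE f_nonneg)
next
  case False
  define A where "A = {\<omega> \<in> space M. \<exists>j\<le>n. real j * lam < (\<Sum>k=1..j. f (X k \<omega>))}"
  define G where "G v = Max ((\<lambda>j. \<Sum>l<j. f (v l) - lam) ` {..n})" for v :: "nat \<Rightarrow> real"
  have [measurable]: "G \<in> borel_measurable (PiM {..<n} (\<lambda>_. borel))"
    unfolding G_def by measurable
  have G_block: "G (\<lambda>l\<in>{..<n}. X (l + s) \<omega>) = Max ((\<lambda>j. \<Sum>l<j. f (X (l + s) \<omega>) - lam) ` {..n})" for s \<omega>
    unfolding G_def by (intro arg_cong[where f=Max] image_cong refl sum.cong) auto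
  have A_eq: "A = {\<omega> \<in> space M. 0 < G (\<lambda>l\<in>{..<n}. X (l + 1) \<omega>)}"
    unfolding A_def G_block by (subst Max_gr_iff) (auto simp: sum_subtractf sum.atLeast1_atMost_eq)
  then have [measurable]: "A \<in> sets M" by simp
  have integrable_G: "integrable M (\<lambda>\<omega>. G (\<lambda>l\<in>{..<n}. X (l + 1) \<omega>))"
  proof (rule Bochner_Integration.integrable_bound)
    show "integrable M (\<lambda>\<omega>. \<Sum>l<n. \<bar>f (X (l + 1) \<omega>) - lam\<bar>)"
      using integrable_comp_X[OF _ integrable_f] by auto
    show "AE \<omega> in M. norm (G (\<lambda>l\<in>{..<n}. X (l + 1) \<omega>)) \<le> norm (\<Sum>l<n. \<bar>f (X (l + 1) \<omega>) - lam\<bar>)"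
      unfolding G_block using abs_Max_partial_sums_le
      by (auto intro!: AE_I2 order_trans[OF _ abs_ge_self])
  qed simp
  then have integrable_G_shift: "integrable M (\<lambda>\<omega>. G (\<lambda>l\<in>{..<n}. X (l + 2) \<omega>))"
    using integrable_shift_iff[of n 1 2 G] False by simp
  have "0 = expectation (\<lambda>\<omega>. G (\<lambda>l\<in>{..<n}. X (l + 1) \<omega>) - G (\<lambda>l\<in>{..<n}. X (l + 2) \<omega>))"
    using expectation_shift_eq[of n 1 2 G] False integrable_G integrable_G_shift by simp
  also have "\<dots> \<le> expectation (\<lambda>\<omega>. (f (X 1 \<omega>) - lam) * indicator A \<omega>)"
  proof (rule integral_mono)
    fix \<omega> assume "\<omega> \<in> space M"
    then show "G (\<lambda>l\<in>{..<n}. X (l + 1) \<omega>) - G (\<lambda>l\<in>{..<n}. X (l + 2) \<omega>)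
        \<le> (f (X 1 \<omega>) - lam) * indicator A \<omega>"
      using Max_partial_sums_diff_shift_le[of "\<lambda>l. f (X (l + 1) \<omega>) - lam" n]
      unfolding A_eq G_block by (simp add: indicator_def)
  qed (use integrable_G integrable_G_shift integrable_f in \<open>auto intro: integrable_real_mult_indicator\<close>)
  finally show ?thesis
    using mult_prob_le_expectation[of A "\<lambda>\<omega>. f (X 1 \<omega>)"] integrable_f f_nonneg by (simp add: A_def)
qed


lemma maximal_inequality:
  fixes f :: "real \<Rightarrow> real"
  assumes [measurable]: "f \<in> borel_measurable borel" and "\<And>x. 0 \<le> f x"
    and "integrable M (\<lambda>\<omega>. f (X 1 \<omega>))" and lam: "lam > 0"
  shows "prob {\<omega> \<in> space M. \<exists>n. real n * lam < (\<Sum>k=1..n. f (X k \<omega>))}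
    \<le> expectation (\<lambda>\<omega>. f (X 1 \<omega>)) / lam"
proof -
  define A where "A n = {\<omega> \<in> space M. \<exists>j\<le>n. real j * lam < (\<Sum>k=1..j. f (X k \<omega>))}" for n
  have "(\<lambda>n. prob (A n)) \<longlonglongrightarrow> prob (\<Union>n. A n)"
    by (rule finite_Lim_measure_incseq) (auto simp: A_def incseq_def intro: le_trans)
  moreover have "prob (A n) \<le> expectation (\<lambda>\<omega>. f (X 1 \<omega>)) / lam" for n
    using maximal_inequality_finite[OF assms(1-3), of lam n] lam
    by (simp add: A_def field_simps mult.commute)
  ultimately have "prob (\<Union>n. A n) \<le> expectation (\<lambda>\<omega>. f (X 1 \<omega>)) / lam"
    by (intro LIMSEQ_le_const2) auto
  moreover have "(\<Union>n. A n) = {\<omega> \<in> space M. \<exists>n. real n * lam < (\<Sum>k=1..n. f (X k \<omega>))}"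
    by (auto simp: A_def)
  ultimately show ?thesis by simp
qed

lemma AE_tendsto_mean_bounded:
  fixes f :: "real \<Rightarrow> real"
  assumes [measurable]: "f \<in> borel_measurable borel" and f_bounds: "\<And>x. 0 \<le> f x \<and> f x \<le> B"
  shows "AE \<omega> in M. (\<lambda>n. (\<Sum>k=1..n. f (X k \<omega>)) / real n) \<longlonglongrightarrow> expectation (\<lambda>\<omega>. f (X 1 \<omega>))"
proof -
  interpret iid_bounded_kernel M X 1 "\<lambda>v. f (v 0)" B
    by unfold_locales (auto simp: f_bounds)
  have "ustat 1 (\<lambda>v. f (v 0)) n \<omega> = (\<Sum>k=1..n. f (X k \<omega>)) / real n" for n \<omega>
    unfolding ustat_def ustat_sum_def msubsets_1 by (subst sum.reindex) (auto simp: subsample_def)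
  moreover have "kernel_mean 1 (\<lambda>v. f (v 0)) = expectation (\<lambda>\<omega>. f (X 1 \<omega>))"
    using expectation_g_subsample[OF atLeastAtMost_in_msubsets] by (simp add: subsample_def)
  ultimately show ?thesis using AE_tendsto_ustat by simp
qed

lemma AE_ex_sum_le_mult:
  fixes h :: "nat \<Rightarrow> real \<Rightarrow> real"
  assumes [measurable]: "\<And>K. h K \<in> borel_measurable borel" and h_nonneg: "\<And>K x. 0 \<le> h K x"
    and integrable_h: "\<And>K. integrable M (\<lambda>\<omega>. h K (X 1 \<omega>))"
    and mean_h: "(\<lambda>K. expectation (\<lambda>\<omega>. h K (X 1 \<omega>))) \<longlonglongrightarrow> 0" and lam: "lam > 0"
  shows "AE \<omega> in M. \<exists>K. \<forall>n. (\<Sum>k=1..n. h K (X k \<omega>)) \<le> real n * lam"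
proof -
  define N where "N = (\<Inter>K. {\<omega> \<in> space M. \<exists>n. real n * lam < (\<Sum>k=1..n. h K (X k \<omega>))})"
  have N_sets: "N \<in> sets M" unfolding N_def by measurable
  have "prob N \<le> expectation (\<lambda>\<omega>. h K (X 1 \<omega>)) / lam" for K
  proof -
    have "prob N \<le> prob {\<omega> \<in> space M. \<exists>n. real n * lam < (\<Sum>k=1..n. h K (X k \<omega>))}"
      by (rule finite_measure_mono) (auto simp: N_def)
    then show ?thesis using maximal_inequality[OF _ h_nonneg integrable_h lam, of K] by simp
  qed
  moreover have "(\<lambda>K. expectation (\<lambda>\<omega>. h K (X 1 \<omega>)) / lam) \<longlonglongrightarrow> 0 / lam"
    using lam by (intro tendsto_intros mean_h) simp
  ultimately have "prob N \<le> 0"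
    by (intro LIMSEQ_le_const[where X="\<lambda>K. expectation (\<lambda>\<omega>. h K (X 1 \<omega>)) / lam"]) auto
  then have "emeasure M N = 0"
    using N_sets by (simp add: emeasure_eq_measure measure_nonneg antisym)
  then show ?thesis
    by (intro AE_I[OF _ _ N_sets]) (auto simp: N_def not_le)
qed

lemma AE_ex_eventually_mean_le:
  fixes h :: "nat \<Rightarrow> real \<Rightarrow> real"
  assumes "\<And>K. h K \<in> borel_measurable borel" and "\<And>K x. 0 \<le> h K x"
    and "\<And>K. integrable M (\<lambda>\<omega>. h K (X 1 \<omega>))"
    and "(\<lambda>K. expectation (\<lambda>\<omega>. h K (X 1 \<omega>))) \<longlonglongrightarrow> 0"
  shows "AE \<omega> in M. \<forall>e>0. \<exists>K. eventually (\<lambda>n. (\<Sum>k=1..n. h K (X k \<omega>)) / real n \<le> e) sequentially"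
proof -
  have "AE \<omega> in M. \<forall>r. \<exists>K. \<forall>n. (\<Sum>k=1..n. h K (X k \<omega>)) \<le> real n * inverse (Suc r)"
    unfolding AE_all_countable using AE_ex_sum_le_mult[OF assms] by simp
  then show ?thesis
  proof eventually_elim
    case (elim \<omega>)
    show ?case
    proof (intro allI impI)
      fix e :: real assume "e > 0"
      then obtain r where r: "inverse (Suc r) < e" using reals_Archimedean by blast
      obtain K where K: "\<And>n. (\<Sum>k=1..n. h K (X k \<omega>)) \<le> real n * inverse (Suc r)"
        using elim by blast
      have "(\<Sum>k=1..n. h K (X k \<omega>)) / real n \<le> e" if "n \<ge> 1" for n
      proof -
        have "real n * inverse (Suc r) \<le> real n * e" using r by (intro mult_left_mono) auto
        then have "(\<Sum>k=1..n. h K (X k \<omega>)) \<le> real n * e" by (rule order_trans[OF K])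
        then show ?thesis using that by (simp add: divide_le_eq mult.commute)
      qed
      then show "\<exists>K. eventually (\<lambda>n. (\<Sum>k=1..n. h K (X k \<omega>)) / real n \<le> e) sequentially"
        unfolding eventually_sequentially by blast
    qed
  qed
qed

lemma AE_tendsto_mean_nonneg:
  fixes f :: "real \<Rightarrow> real"
  assumes [measurable]: "f \<in> borel_measurable borel" and f_nonneg: "\<And>x. 0 \<le> f x"
    and integrable_f: "integrable M (\<lambda>\<omega>. f (X 1 \<omega>))"
  shows "AE \<omega> in M. (\<lambda>n. (\<Sum>k=1..n. f (X k \<omega>)) / real n) \<longlonglongrightarrow> expectation (\<lambda>\<omega>. f (X 1 \<omega>))"
proof -
  define h where "h K x = max (f x - real K) 0" for K :: nat and x
  have [measurable]: "h K \<in> borel_measurable borel" for K unfolding h_def by measurable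
  have split: "f x = min (f x) (real K) + h K x" for K x by (auto simp: h_def)
  have integrable_h: "integrable M (\<lambda>\<omega>. h K (X 1 \<omega>))" for K
    by (rule Bochner_Integration.integrable_bound[OF integrable_f]) (auto simp: h_def f_nonneg)
  have integrable_min: "integrable M (\<lambda>\<omega>. min (f (X 1 \<omega>)) (real K))" for K
    by (rule Bochner_Integration.integrable_bound[OF integrable_f]) (auto simp: f_nonneg)
  have mean_h: "(\<lambda>K. expectation (\<lambda>\<omega>. h K (X 1 \<omega>))) \<longlonglongrightarrow> 0"
    using expectation_excess_tendsto_0[OF integrable_f, of 1] by (simp add: h_def)
  have mean_min: "expectation (\<lambda>\<omega>. min (f (X 1 \<omega>)) (real K)) =
      expectation (\<lambda>\<omega>. f (X 1 \<omega>)) - expectation (\<lambda>\<omega>. h K (X 1 \<omega>))" for K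
    using Bochner_Integration.integral_add[OF integrable_min[of K] integrable_h[of K]]
    by (simp only: split[symmetric])
  have "AE \<omega> in M. \<forall>K::nat. (\<lambda>n. (\<Sum>k=1..n. min (f (X k \<omega>)) (real K)) / real n)
      \<longlonglongrightarrow> expectation (\<lambda>\<omega>. min (f (X 1 \<omega>)) (real K))"
    unfolding AE_all_countable
  proof
    fix K :: nat
    show "AE \<omega> in M. (\<lambda>n. (\<Sum>k=1..n. min (f (X k \<omega>)) (real K)) / real n)
        \<longlonglongrightarrow> expectation (\<lambda>\<omega>. min (f (X 1 \<omega>)) (real K))"
      by (rule AE_tendsto_mean_bounded[where B="real K"]) (auto simp: f_nonneg)
  qed
  moreover have "AE \<omega> in M. \<forall>e>0. \<exists>K. eventually (\<lambda>n. (\<Sum>k=1..n. h K (X k \<omega>)) / real n \<le> e) sequentially"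
    using mean_h integrable_h by (intro AE_ex_eventually_mean_le) (auto simp: h_def)
  ultimately show ?thesis
  proof eventually_elim
    case (elim \<omega>)
    show ?case
    proof (rule tendsto_of_truncations)
      show "(\<Sum>k=1..n. f (X k \<omega>)) / real n = (\<Sum>k=1..n. min (f (X k \<omega>)) (real K)) / real n
          + (\<Sum>k=1..n. h K (X k \<omega>)) / real n" for K n
        by (subst split[of _ K]) (simp add: sum.distrib add_divide_distrib)
      show "(\<lambda>K. expectation (\<lambda>\<omega>. min (f (X 1 \<omega>)) (real K))) \<longlonglongrightarrow> expectation (\<lambda>\<omega>. f (X 1 \<omega>))"
        unfolding mean_min using tendsto_diff[OF tendsto_const mean_h] by simp
      show "\<exists>K. eventually (\<lambda>n. (\<Sum>k=1..n. h K (X k \<omega>)) / real n \<le> e) sequentially" if "e > 0" for e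
        using elim(2) that by blast
      show "0 \<le> (\<Sum>k=1..n. h K (X k \<omega>)) / real n" for K n
        by (simp add: h_def sum_nonneg)
      show "(\<lambda>n. (\<Sum>k=1..n. min (f (X k \<omega>)) (real K)) / real n)
          \<longlonglongrightarrow> expectation (\<lambda>\<omega>. min (f (X 1 \<omega>)) (real K))" for K
        using elim(1) by blast
      show "expectation (\<lambda>\<omega>. min (f (X 1 \<omega>)) (real K)) \<le> expectation (\<lambda>\<omega>. f (X 1 \<omega>))" for K
        unfolding mean_min by (simp add: integral_nonneg_AE h_def)
    qed
  qed
qed

lemma AE_tendsto_sample_mean:
  assumes integrable_X: "integrable M (X 1)"
  shows "AE \<omega> in M. (\<lambda>n. (\<Sum>k=1..n. X k \<omega>) / real n) \<longlonglongrightarrow> expectation (X 1)"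
proof -
  have integrable_parts: "integrable M (\<lambda>\<omega>. max (X 1 \<omega>) 0)" "integrable M (\<lambda>\<omega>. max (- X 1 \<omega>) 0)"
    using integrable_X by (auto intro: Bochner_Integration.integrable_bound)
  have "AE \<omega> in M. (\<lambda>n. (\<Sum>k=1..n. max (X k \<omega>) 0) / real n) \<longlonglongrightarrow> expectation (\<lambda>\<omega>. max (X 1 \<omega>) 0)"
    "AE \<omega> in M. (\<lambda>n. (\<Sum>k=1..n. max (- X k \<omega>) 0) / real n) \<longlonglongrightarrow> expectation (\<lambda>\<omega>. max (- X 1 \<omega>) 0)"
    using integrable_parts by (intro AE_tendsto_mean_nonneg; simp)+
  then show ?thesis
  proof eventually_elim
    case (elim \<omega>)
    have parts: "max x 0 - max (- x) 0 = x" for x :: real by auto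
    then have "(\<Sum>k=1..n. X k \<omega>) / real n =
        (\<Sum>k=1..n. max (X k \<omega>) 0) / real n - (\<Sum>k=1..n. max (- X k \<omega>) 0) / real n"
      and "expectation (X 1) = expectation (\<lambda>\<omega>. max (X 1 \<omega>) 0) - expectation (\<lambda>\<omega>. max (- X 1 \<omega>) 0)"
      for n
      using integrable_parts by (simp_all add: diff_divide_distrib[symmetric] sum_subtractf[symmetric]
          Bochner_Integration.integral_diff[symmetric] parts)
    then show ?case using tendsto_diff[OF elim] by simp
  qed
qed

end

section \<open>U-statistics with dominated kernels\<close>

lemma truncation_error_le_sum:
  fixes v :: "nat \<Rightarrow> real"
  assumes m: "m \<ge> 1" and y: "y \<le> (\<Sum>l<m. \<bar>v l\<bar>)"
  shows "y - min y K \<le> (\<Sum>l<m. max (\<bar>v l\<bar> - K / m) 0)"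
proof (cases "y \<le> K")
  case True
  then show ?thesis by (simp add: sum_nonneg)
next
  case False
  then have "y - min y K \<le> (\<Sum>l<m. \<bar>v l\<bar>) - K" using y by simp
  also have "\<dots> = (\<Sum>l<m. \<bar>v l\<bar> - K / m)" using m by (simp add: sum_subtractf)
  also have "\<dots> \<le> (\<Sum>l<m. max (\<bar>v l\<bar> - K / m) 0)" by (intro sum_mono) simp
  finally show ?thesis .
qed

context iid_seq
begin

lemma integrable_dominated_kernel_subsample:
  fixes g :: "(nat \<Rightarrow> real) \<Rightarrow> real"
  assumes integrable_X: "integrable M (X 1)" and J: "J \<in> msubsets m n" and m: "m \<ge> 1"
    and [measurable]: "g \<in> borel_measurable (PiM {..<m} (\<lambda>_. borel))"
    and g_dominated: "\<And>v. \<bar>g v\<bar> \<le> (\<Sum>l<m. \<bar>v l\<bar>)"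
  shows "integrable M (\<lambda>\<omega>. g (subsample m J \<omega>))"
proof (rule Bochner_Integration.integrable_bound)
  show "integrable M (\<lambda>\<omega>. \<Sum>j\<in>J. \<bar>X j \<omega>\<bar>)"
    using integrable_comp_X[of abs] integrable_X msubsetsD(3)[OF J]
    by (intro Bochner_Integration.integrable_sum) auto
  show "AE \<omega> in M. norm (g (subsample m J \<omega>)) \<le> norm (\<Sum>j\<in>J. \<bar>X j \<omega>\<bar>)"
  proof (rule AE_I2)
    fix \<omega>
    have "\<bar>g (subsample m J \<omega>)\<bar> \<le> (\<Sum>j\<in>J. \<bar>X j \<omega>\<bar>)"
      using g_dominated[of "subsample m J \<omega>"] sum_subsample[OF J, of abs] by simp
    then show "norm (g (subsample m J \<omega>)) \<le> norm (\<Sum>j\<in>J. \<bar>X j \<omega>\<bar>)" by simp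
  qed
qed (use J in measurable)

lemma
  assumes integrable_X: "integrable M (X 1)" and m: "m \<ge> 1"
    and [measurable]: "g \<in> borel_measurable (PiM {..<m} (\<lambda>_. borel))"
    and g_nonneg: "\<And>v. 0 \<le> g v" and g_dominated: "\<And>v. g v \<le> (\<Sum>l<m. \<bar>v l\<bar>)"
  shows kernel_mean_min_tendsto: "(\<lambda>K. kernel_mean m (\<lambda>v. min (g v) (real K))) \<longlonglongrightarrow> kernel_mean m g"
    and kernel_mean_min_le: "kernel_mean m (\<lambda>v. min (g v) (real K)) \<le> kernel_mean m g"
proof -
  note J = atLeastAtMost_in_msubsets[of m]
  have [measurable]: "(\<lambda>\<omega>. g (subsample m {1..m} \<omega>)) \<in> borel_measurable M"
    by (rule measurable_compose[OF measurable_subsample[OF J]]) simp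
  have integrable_g: "integrable M (\<lambda>\<omega>. g (subsample m {1..m} \<omega>))"
    using g_nonneg g_dominated by (intro integrable_dominated_kernel_subsample[OF integrable_X J m]) auto
  have mean_g: "kernel_mean m g = expectation (\<lambda>\<omega>. g (subsample m {1..m} \<omega>))"
    and mean_min: "kernel_mean m (\<lambda>v. min (g v) (real K)) =
      expectation (\<lambda>\<omega>. min (g (subsample m {1..m} \<omega>)) (real K))" for K
    by (rule expectation_subsample[OF J m, symmetric], measurable)+
  show "(\<lambda>K. kernel_mean m (\<lambda>v. min (g v) (real K))) \<longlonglongrightarrow> kernel_mean m g"
    unfolding mean_g mean_min
  proof (rule integral_dominated_convergence[where w="\<lambda>\<omega>. g (subsample m {1..m} \<omega>)"])
    show "AE \<omega> in M. norm (min (g (subsample m {1..m} \<omega>)) (real K)) \<le> g (subsample m {1..m} \<omega>)" for K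
      using g_nonneg by (intro AE_I2) (simp add: min_def)
    show "AE \<omega> in M. (\<lambda>K. min (g (subsample m {1..m} \<omega>)) (real K)) \<longlonglongrightarrow> g (subsample m {1..m} \<omega>)"
    proof (rule AE_I2)
      fix \<omega>
      obtain K0 :: nat where "g (subsample m {1..m} \<omega>) \<le> real K0" using real_arch_simple by blast
      then have "eventually (\<lambda>K. min (g (subsample m {1..m} \<omega>)) (real K) = g (subsample m {1..m} \<omega>))
          sequentially"
        unfolding eventually_sequentially by (intro exI[of _ K0]) auto
      then show "(\<lambda>K. min (g (subsample m {1..m} \<omega>)) (real K)) \<longlonglongrightarrow> g (subsample m {1..m} \<omega>)"
        by (rule tendsto_eventually)
    qed
  qed (use integrable_g in simp_all)
  show "kernel_mean m (\<lambda>v. min (g v) (real K)) \<le> kernel_mean m g"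
    unfolding mean_g mean_min
    using integrable_g by (intro integral_mono Bochner_Integration.integrable_bound[OF integrable_g]) auto
qed

lemma ustat_diff_le_mean:
  assumes m: "m \<ge> 1" and n: "n \<ge> m"
    and diff: "\<And>v. g v - g' v \<le> (\<Sum>l<m. \<phi> (v l))"
  shows "ustat m g n \<omega> - ustat m g' n \<omega> \<le> real m * ((\<Sum>k=1..n. \<phi> (X k \<omega>)) / real n)"
proof -
  define N where "N = real (n choose m)"
  have N_pos: "N > 0" using n by (simp add: N_def)
  have "ustat_sum m g n \<omega> - ustat_sum m g' n \<omega> \<le> (\<Sum>J\<in>msubsets m n. \<Sum>j\<in>J. \<phi> (X j \<omega>))"
    unfolding ustat_sum_def sum_subtractf[symmetric]
  proof (rule sum_mono)
    fix J assume "J \<in> msubsets m n"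
    then show "g (subsample m J \<omega>) - g' (subsample m J \<omega>) \<le> (\<Sum>j\<in>J. \<phi> (X j \<omega>))"
      using diff[of "subsample m J \<omega>"] sum_subsample[of J m n \<phi> \<omega>] by simp
  qed
  also have "\<dots> = real ((n - 1) choose (m - 1)) * (\<Sum>k=1..n. \<phi> (X k \<omega>))"
    by (rule sum_msubsets_sum[OF m])
  also have "real ((n - 1) choose (m - 1)) = real m * N / real n"
    using times_binomial_minus1_eq[of m n] m n unfolding N_def
    by (simp add: field_simps flip: of_nat_mult)
  finally show ?thesis
    using N_pos by (simp add: ustat_def N_def field_simps diff_divide_distrib[symmetric])
qed

lemma ustat_min_le: "ustat m (\<lambda>v. min (g v) K) n \<omega> \<le> ustat m g n \<omega>"
  unfolding ustat_def ustat_sum_def by (intro divide_right_mono sum_mono) simp_all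

lemma ustat_min_error_le:
  assumes m: "m \<ge> 1" and n: "n \<ge> m" and g_dominated: "\<And>v. g v \<le> (\<Sum>l<m. \<bar>v l\<bar>)"
  shows "ustat m g n \<omega> - ustat m (\<lambda>v. min (g v) K) n \<omega>
    \<le> real m * ((\<Sum>k=1..n. max (\<bar>X k \<omega>\<bar> - K / real m) 0) / real n)"
  using truncation_error_le_sum[OF m g_dominated] by (intro ustat_diff_le_mean[OF m n])

lemma AE_tendsto_ustat_dominated:
  assumes integrable_X: "integrable M (X 1)" and m: "m \<ge> 1"
    and [measurable]: "g \<in> borel_measurable (PiM {..<m} (\<lambda>_. borel))"
    and g_nonneg: "\<And>v. 0 \<le> g v" and g_dominated: "\<And>v. g v \<le> (\<Sum>l<m. \<bar>v l\<bar>)"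
  shows "AE \<omega> in M. (\<lambda>n. ustat m g n \<omega>) \<longlonglongrightarrow> kernel_mean m g"
proof -
  define gK where "gK K v = min (g v) (real K)" for K :: nat and v
  define hK where "hK K x = max (\<bar>x\<bar> - real K / real m) 0" for K :: nat and x :: real
  have [measurable]: "hK K \<in> borel_measurable borel" for K unfolding hK_def by measurable
  have integrable_hK: "integrable M (\<lambda>\<omega>. hK K (X 1 \<omega>))" for K
    by (rule Bochner_Integration.integrable_bound[OF integrable_X]) (auto simp: hK_def)
  have [measurable]: "gK K \<in> borel_measurable (PiM {..<m} (\<lambda>_. borel))" for K
    unfolding gK_def by measurable
  interpret truncated: iid_bounded_kernel M X m "gK K" "real K" for K
    by unfold_locales (use m in \<open>simp_all add: gK_def g_nonneg\<close>)
  have "AE \<omega> in M. \<forall>K. (\<lambda>n. ustat m (gK K) n \<omega>) \<longlonglongrightarrow> kernel_mean m (gK K)"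
    unfolding AE_all_countable using truncated.AE_tendsto_ustat by blast
  moreover have "AE \<omega> in M. \<forall>K. (\<lambda>n. (\<Sum>k=1..n. hK K (X k \<omega>)) / real n)
      \<longlonglongrightarrow> expectation (\<lambda>\<omega>. hK K (X 1 \<omega>))"
    unfolding AE_all_countable
    using AE_tendsto_mean_nonneg[OF _ _ integrable_hK] by (simp add: hK_def)
  ultimately show ?thesis
  proof eventually_elim
    case (elim \<omega>)
    show ?case
    proof (rule tendsto_of_truncations_bounded[where b="\<lambda>K n. ustat m (gK K) n \<omega>"
          and d="\<lambda>K n. real m * ((\<Sum>k=1..n. hK K (X k \<omega>)) / real n)"])
      show "0 \<le> ustat m g n \<omega> - ustat m (gK K) n \<omega>" for K n
        using ustat_min_le[of m g "real K" n \<omega>] by (simp add: gK_def[abs_def])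
      show "kernel_mean m (gK K) \<le> kernel_mean m g" "(\<lambda>K. kernel_mean m (gK K)) \<longlonglongrightarrow> kernel_mean m g" for K
        unfolding gK_def using kernel_mean_min_tendsto[OF integrable_X m _ g_nonneg g_dominated]
          kernel_mean_min_le[OF integrable_X m _ g_nonneg g_dominated] by simp_all
      show "eventually (\<lambda>n. ustat m g n \<omega> - ustat m (gK K) n \<omega>
          \<le> real m * ((\<Sum>k=1..n. hK K (X k \<omega>)) / real n)) sequentially" for K
        using eventually_ge_at_top[of m]
      proof eventually_elim
        case (elim n)
        then show ?case
          using ustat_min_error_le[OF m elim g_dominated, of \<omega> "real K"] by (simp add: gK_def[abs_def] hK_def)
      qed
      show "(\<lambda>K. real m * expectation (\<lambda>\<omega>. hK K (X 1 \<omega>))) \<longlonglongrightarrow> 0"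
        using tendsto_mult_left[OF expectation_excess_tendsto_0[OF integrable_abs[OF integrable_X]],
            of "real m" "real m"] m
        by (simp add: hK_def)
      show "(\<lambda>n. real m * ((\<Sum>k=1..n. hK K (X k \<omega>)) / real n))
          \<longlonglongrightarrow> real m * expectation (\<lambda>\<omega>. hK K (X 1 \<omega>))" for K
        using elim(2) by (intro tendsto_mult_left) blast
    qed (use elim in auto)
  qed
qed

end

section \<open>The estimators\<close>

lemma obtain_bij_betw_sending_to_1:
  fixes i m :: nat
  assumes i: "i \<in> {1..m}"
  obtains \<sigma> where "bij_betw \<sigma> {..<m} {1..m}" "\<sigma> (i - 1) = 1"
proof -
  define \<sigma> where "\<sigma> l = (if l = 0 then i else if l = i - 1 then 1 else Suc l)" for l
  have "inj_on \<sigma> {..<m}" "\<sigma> ` {..<m} \<subseteq> {1..m}"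
    using i unfolding \<sigma>_def inj_on_def by auto
  moreover from this have "\<sigma> ` {..<m} = {1..m}"
    by (intro card_subset_eq) (auto simp: card_image)
  ultimately have "bij_betw \<sigma> {..<m} {1..m}" by (simp add: bij_betw_def)
  moreover have "\<sigma> (i - 1) = 1" using i by (auto simp: \<sigma>_def)
  ultimately show ?thesis by (rule that)
qed

lemma diff_le_sum_abs:
  fixes v :: "'a \<Rightarrow> real"
  assumes "finite I" "a \<in> I" "b \<in> I"
  shows "v a - v b \<le> (\<Sum>l\<in>I. \<bar>v l\<bar>)"
proof (cases "a = b")
  case True
  then show ?thesis by (simp add: sum_nonneg)
next
  case False
  then have "v a - v b \<le> (\<Sum>l\<in>{a, b}. \<bar>v l\<bar>)" by simp
  also have "\<dots> \<le> (\<Sum>l\<in>I. \<bar>v l\<bar>)" using assms by (intro sum_mono2) auto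
  finally show ?thesis .
qed

lemma coeff_IG_mult_choose:
  assumes m: "m \<ge> 1" and n: "n \<ge> m"
  shows "coeff_IG m n * real (n choose m) = real n / real m"
proof -
  define P where "P = (\<Prod>k = 1..m - 1. real n - real k)"
  have "real (n choose m) * fact m = (\<Prod>i = 0..<m. real n - real i)"
    using gbinomial_mult_fact'[of "real n" m] by (simp add: binomial_gbinomial)
  also have "\<dots> = (real n - real 0) * (\<Prod>i = Suc 0..<m. real n - real i)"
    using m by (subst prod.atLeast_Suc_lessThan) auto
  also have "{Suc 0..<m} = {1..m - 1}" using m by auto
  finally have B: "real (n choose m) * fact m = real n * P" unfolding P_def by simp
  have Pnz: "P \<noteq> 0" unfolding P_def using n by (auto simp: prod_zero_iff)
  have fm: "(fact m :: real) = real m * fact (m - 1)" using m by (simp add: fact_reduce)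
  have fpos: "(fact (m - 1) :: real) > 0" by simp
  have "coeff_IG m n * real (n choose m) = fact (m - 1) / P * real (n choose m)"
    unfolding coeff_IG_def P_def by simp
  also have "\<dots> = fact (m - 1) * (real n * P / fact m) / P"
    using B by (simp add: field_simps)
  also have "\<dots> = real n / real m" using Pnz fm fpos m by (simp add: field_simps)
  finally show ?thesis .
qed

(* v plays the role of (X j_1, ..., X j_m), so v (i - 1) is X j_i. *)
definition IG_min_kernel :: "nat \<Rightarrow> nat \<Rightarrow> (nat \<Rightarrow> real) \<Rightarrow> real" where
  "IG_min_kernel m i v = v (i - 1) - Min (v ` {..<m})"

definition IG_max_kernel :: "nat \<Rightarrow> nat \<Rightarrow> (nat \<Rightarrow> real) \<Rightarrow> real" where
  "IG_max_kernel m i v = Max (v ` {..<m}) - v (i - 1)"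

context
  fixes m i :: nat
  assumes i: "i \<in> {1..m}"
begin

lemma measurable_IG_kernels [measurable]:
  "IG_min_kernel m i \<in> borel_measurable (PiM {..<m} (\<lambda>_. borel))"
  "IG_max_kernel m i \<in> borel_measurable (PiM {..<m} (\<lambda>_. borel))"
proof -
  have [measurable]: "(\<lambda>v. v l) \<in> borel_measurable (PiM {..<m} (\<lambda>_. borel))" if "l < m" for l
    using that by (intro measurable_component_singleton[where I="{..<m}" and M="\<lambda>_. borel", simplified]) auto
  have "i - 1 < m" using i by auto
  then show "IG_min_kernel m i \<in> borel_measurable (PiM {..<m} (\<lambda>_. borel))"
    "IG_max_kernel m i \<in> borel_measurable (PiM {..<m} (\<lambda>_. borel))"
    unfolding IG_min_kernel_def IG_max_kernel_def by measurable
qed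

lemma IG_kernels_bounds:
  "0 \<le> IG_min_kernel m i v" "IG_min_kernel m i v \<le> (\<Sum>l<m. \<bar>v l\<bar>)"
  "0 \<le> IG_max_kernel m i v" "IG_max_kernel m i v \<le> (\<Sum>l<m. \<bar>v l\<bar>)"
proof -
  have i_idx: "i - 1 \<in> {..<m}" using i by auto
  then have ne: "v ` {..<m} \<noteq> {}" by auto
  have "Min (v ` {..<m}) \<in> v ` {..<m}" "Max (v ` {..<m}) \<in> v ` {..<m}"
    using ne by (simp_all add: Min_in Max_in)
  then obtain a b where a: "a \<in> {..<m}" "Min (v ` {..<m}) = v a" and b: "b \<in> {..<m}" "Max (v ` {..<m}) = v b"
    by blast
  show "0 \<le> IG_min_kernel m i v" "0 \<le> IG_max_kernel m i v"
    using i_idx unfolding IG_min_kernel_def IG_max_kernel_def by simp_all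
  show "IG_min_kernel m i v \<le> (\<Sum>l<m. \<bar>v l\<bar>)" "IG_max_kernel m i v \<le> (\<Sum>l<m. \<bar>v l\<bar>)"
    unfolding IG_min_kernel_def IG_max_kernel_def a(2) b(2)
    using i_idx a(1) b(1) by (simp_all add: diff_le_sum_abs)
qed

end

context iid_seq
begin

lemma
  assumes "i \<in> {1..m}"
  shows IG_min_hat_eq_ustat_sum: "IG_min_hat m i (\<lambda>k. X k \<omega>) n =
      coeff_IG m n * (ustat_sum m (IG_min_kernel m i) n \<omega> / (\<Sum>k=1..n. X k \<omega>))"
    and IG_max_hat_eq_ustat_sum: "IG_max_hat m i (\<lambda>k. X k \<omega>) n =
      coeff_IG m n * (ustat_sum m (IG_max_kernel m i) n \<omega> / (\<Sum>k=1..n. X k \<omega>))"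
proof -
  have "i - 1 < m" using assms by auto
  then have "subsample m J \<omega> (i - 1) = X (sorted_list_of_set J ! (i - 1)) \<omega>" for J
    by (simp add: subsample_def)
  then show "IG_min_hat m i (\<lambda>k. X k \<omega>) n =
      coeff_IG m n * (ustat_sum m (IG_min_kernel m i) n \<omega> / (\<Sum>k=1..n. X k \<omega>))"
    "IG_max_hat m i (\<lambda>k. X k \<omega>) n =
      coeff_IG m n * (ustat_sum m (IG_max_kernel m i) n \<omega> / (\<Sum>k=1..n. X k \<omega>))"
    unfolding IG_min_hat_def IG_max_hat_def ustat_sum_def msubsets_def[symmetric]
      IG_min_kernel_def IG_max_kernel_def
    by (simp_all add: image_subsample cong: sum.cong)
qed

lemma
  assumes i: "i \<in> {1..m}"
  shows kernel_mean_IG_min_kernel: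
      "kernel_mean m (IG_min_kernel m i) = expectation (\<lambda>\<omega>. X 1 \<omega> - Min ((\<lambda>k. X k \<omega>) ` {1..m}))"
    and kernel_mean_IG_max_kernel:
      "kernel_mean m (IG_max_kernel m i) = expectation (\<lambda>\<omega>. Max ((\<lambda>k. X k \<omega>) ` {1..m}) - X 1 \<omega>)"
proof -
  obtain \<sigma> where \<sigma>: "bij_betw \<sigma> {..<m} {1..m}" "\<sigma> (i - 1) = 1"
    using obtain_bij_betw_sending_to_1[OF i] .
  have m: "m \<ge> 1" and i_idx: "i - 1 < m" using i by auto
  have image: "(\<lambda>l. X (\<sigma> l) \<omega>) ` {..<m} = (\<lambda>k. X k \<omega>) ` {1..m}" for \<omega>
    using image_image[of "\<lambda>k. X k \<omega>" \<sigma> "{..<m}"] bij_betw_imp_surj_on[OF \<sigma>(1)] by simp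
  have reindex: "inj_on \<sigma> {..<m}" "\<sigma> ` {..<m} \<subseteq> {1..}"
    using \<sigma>(1) by (auto simp: bij_betw_def)
  show "kernel_mean m (IG_min_kernel m i) = expectation (\<lambda>\<omega>. X 1 \<omega> - Min ((\<lambda>k. X k \<omega>) ` {1..m}))"
    "kernel_mean m (IG_max_kernel m i) = expectation (\<lambda>\<omega>. Max ((\<lambda>k. X k \<omega>) ` {1..m}) - X 1 \<omega>)"
    using expectation_reindex[OF m reindex measurable_IG_kernels(1)[OF i]]
      expectation_reindex[OF m reindex measurable_IG_kernels(2)[OF i]] \<sigma>(2) i_idx
    by (simp_all add: IG_min_kernel_def IG_max_kernel_def image)
qed

lemma AE_tendsto_coeff_IG_ustat_sum:
  assumes integrable_X: "integrable M (X 1)" and mean_nz: "expectation (X 1) \<noteq> 0" and m: "m \<ge> 1"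
    and [measurable]: "g \<in> borel_measurable (PiM {..<m} (\<lambda>_. borel))"
    and "\<And>v. 0 \<le> g v" "\<And>v. g v \<le> (\<Sum>l<m. \<bar>v l\<bar>)"
  shows "AE \<omega> in M. (\<lambda>n. coeff_IG m n * (ustat_sum m g n \<omega> / (\<Sum>k=1..n. X k \<omega>)))
    \<longlonglongrightarrow> kernel_mean m g / (real m * expectation (X 1))"
  using AE_tendsto_ustat_dominated[OF integrable_X m assms(4-6)] AE_tendsto_sample_mean[OF integrable_X]
proof eventually_elim
  case (elim \<omega>)
  have "(\<lambda>n. ustat m g n \<omega> / (real m * ((\<Sum>k=1..n. X k \<omega>) / real n)))
      \<longlonglongrightarrow> kernel_mean m g / (real m * expectation (X 1))"
    using elim mean_nz m by (intro tendsto_intros) auto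
  moreover have "eventually (\<lambda>n. ustat m g n \<omega> / (real m * ((\<Sum>k=1..n. X k \<omega>) / real n)) =
      coeff_IG m n * (ustat_sum m g n \<omega> / (\<Sum>k=1..n. X k \<omega>))) sequentially"
    using eventually_ge_at_top[of m]
  proof eventually_elim
    case (elim n)
    then have "coeff_IG m n = real n / (real m * real (n choose m))"
      using coeff_IG_mult_choose[OF m elim] m by (simp add: field_simps)
    moreover have "real (n choose m) > 0" "real n > 0" using m elim by auto
    ultimately show ?case
      by (cases "(\<Sum>k=1..n. X k \<omega>) = 0") (simp_all add: ustat_def field_simps)
  qed
  ultimately show ?case by (rule Lim_transform_eventually)
qed


lemma AE_tendsto_IG_min_hat:
  assumes "integrable M (X 1)" "expectation (X 1) \<noteq> 0" and i: "i \<in> {1..m}"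
  shows "AE \<omega> in M. (\<lambda>n. IG_min_hat m i (\<lambda>k. X k \<omega>) n) \<longlonglongrightarrow>
    expectation (\<lambda>\<omega>. X 1 \<omega> - Min ((\<lambda>k. X k \<omega>) ` {1..m})) / (real m * expectation (X 1))"
proof -
  have "AE \<omega> in M. (\<lambda>n. coeff_IG m n * (ustat_sum m (IG_min_kernel m i) n \<omega> / (\<Sum>k=1..n. X k \<omega>)))
      \<longlonglongrightarrow> kernel_mean m (IG_min_kernel m i) / (real m * expectation (X 1))"
    using i by (intro AE_tendsto_coeff_IG_ustat_sum assms measurable_IG_kernels IG_kernels_bounds) auto
  then show ?thesis by (simp only: IG_min_hat_eq_ustat_sum[OF i] kernel_mean_IG_min_kernel[OF i])
qed

lemma AE_tendsto_IG_max_hat: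
  assumes "integrable M (X 1)" "expectation (X 1) \<noteq> 0" and i: "i \<in> {1..m}"
  shows "AE \<omega> in M. (\<lambda>n. IG_max_hat m i (\<lambda>k. X k \<omega>) n) \<longlonglongrightarrow>
    expectation (\<lambda>\<omega>. Max ((\<lambda>k. X k \<omega>) ` {1..m}) - X 1 \<omega>) / (real m * expectation (X 1))"
proof -
  have "AE \<omega> in M. (\<lambda>n. coeff_IG m n * (ustat_sum m (IG_max_kernel m i) n \<omega> / (\<Sum>k=1..n. X k \<omega>)))
      \<longlonglongrightarrow> kernel_mean m (IG_max_kernel m i) / (real m * expectation (X 1))"
    using i by (intro AE_tendsto_coeff_IG_ustat_sum assms measurable_IG_kernels IG_kernels_bounds) auto
  then show ?thesis by (simp only: IG_max_hat_eq_ustat_sum[OF i] kernel_mean_IG_max_kernel[OF i])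
qed

end

theorem proposition3p3:
  fixes M :: "'a measure" and X :: "nat \<Rightarrow> 'a \<Rightarrow> real" and m i :: nat
  assumes "prob_space M"
    and "prob_space.indep_vars M (\<lambda>_. borel) X {1..}"
    and "\<And>k. k \<ge> 1 \<Longrightarrow> distr M borel (X k) = distr M borel (X 1)"
    and "\<And>k. k \<ge> 1 \<Longrightarrow> AE \<omega> in M. X k \<omega> \<ge> 0"
    and "integrable M (X 1)"
    and "prob_space.expectation M (X 1) > 0"
    and "m \<ge> 2" and "i \<in> {1..m}"
  shows "(AE \<omega> in M. (\<lambda>n. IG_min_hat m i (\<lambda>k. X k \<omega>) n) \<longlonglongrightarrow>
            prob_space.expectation M (\<lambda>\<omega>. X 1 \<omega> - Min ((\<lambda>k. X k \<omega>) ` {1..m}))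
              / (real m * prob_space.expectation M (X 1))) \<and>
         (AE \<omega> in M. (\<lambda>n. IG_max_hat m i (\<lambda>k. X k \<omega>) n) \<longlonglongrightarrow>
            prob_space.expectation M (\<lambda>\<omega>. Max ((\<lambda>k. X k \<omega>) ` {1..m}) - X 1 \<omega>)
              / (real m * prob_space.expectation M (X 1)))"
proof -
  interpret iid_seq M X
    by (intro iid_seq.intro iid_seq_axioms.intro assms(1-3))
  have mean_nz: "expectation (X 1) \<noteq> 0" using assms(6) by simp
  show ?thesis
    using AE_tendsto_IG_min_hat[OF assms(5) mean_nz assms(8)]
      AE_tendsto_IG_max_hat[OF assms(5) mean_nz assms(8)] by blast
qed

end
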